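(* Let $n>r$ and let $1_r:=1_{(1,\dots,1,0,\dots,0)}$ ($r$ ones followed by $n-r$ zeros). Let $A$ be a $\mathbb{Q}(q)$-algebra and $f\colon\hat S(n,r)\to A$ a surjective $\mathbb{Q}(q)$-algebra homomorphism whose restriction to $1_r\hat S(n,r)1_r$ is injective. Then $f$ is an isomorphism of $\mathbb{Q}(q)$-algebras $\hat S(n,r)\cong A$.
   Context: Fix integers $n\ge3$, $r\ge3$; indices are read modulo $n$. $\hat U=\hat{\mathbf U}_q(\hat{\mathfrak{gl}}_n)$ is the associative unital $\mathbb{Q}(q)$-algebra generated by $R^{\pm1}$, $K_i^{\pm1}$, $E_i$, $E_{-i}$ ($1\le i\le n$) subject to: the $K_i^{\pm1}$ pairwise commute and $K_iK_i^{-1}=K_i^{-1}K_i=1$; $E_iE_{-j}-E_{-j}E_i=\delta_{ij}\frac{K_iK_{i+1}^{-1}-K_i^{-1}K_{i+1}}{q-q^{-1}}$; $K_iE_{\pm j}=q^{\pm(\delta_{i,j}-\delta_{i,j+1})}E_{\pm j}K_i$; for $\epsilon,\delta\in\{1,-1\}$, $E_{\epsilon i}^2E_{\epsilon(i+\delta)}-(q+q^{-1})E_{\epsilon i}E_{\epsilon(i+\delta)}E_{\epsilon i}+E_{\epsilon(i+\delta)}E_{\epsilon i}^2=0$; $E_{\epsilon i}E_{\epsilon j}=E_{\epsilon j}E_{\epsilon i}$ if $j\not\equiv i\pm1\pmod n$; $RR^{-1}=R^{-1}R=1$; $RXR^{-1}=X'$ for $(X,X')\in\{(E_i,E_{i+1}),(E_{-i},E_{-(i+1)}),(K_i^{-1},K_{i+1}^{-1})\}$.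 The coproduct $\Delta$ is the algebra map with $\Delta(E_i)=E_i\otimes K_iK_{i+1}^{-1}+1\otimes E_i$, $\Delta(E_{-i})=K_i^{-1}K_{i+1}\otimes E_{-i}+E_{-i}\otimes1$, $\Delta(K_i^{\pm1})=K_i^{\pm1}\otimes K_i^{\pm1}$, $\Delta(R^{\pm1})=R^{\pm1}\otimes R^{\pm1}$. $V$ is the $\mathbb{Q}(q)$-vector space with basis $\{e_t\}_{t\in\mathbb{Z}}$, a $\hat U$-module via: $E_ie_{t+1}=e_t$ if $i\equiv t\pmod n$ and $0$ otherwise; $E_{-i}e_t=e_{t+1}$ if $i\equiv t\pmod n$ and $0$ otherwise; $K_i^{\pm1}e_t=q^{\pm1}e_t$ if $i\equiv t\pmod n$ and $e_t$ otherwise; $R^{\pm1}e_t=e_{t\pm1}$; $\hat U$ acts on $V^{\otimes r}$ via the iterated coproduct, giving $\psi_{n,r}\colon\hat U\to\mathrm{End}_{\mathbb{Q}(q)}(V^{\otimes r})$. The affine $q$-Schur algebra is $\hat S(n,r):=\psi_{n,r}(\hat U)$ (by affine Schur–Weyl duality this equals the centralizer of the natural right action of the extended affine Hecke algebra of type $\hat A_{r-1}$ on $V^{\otimes r}$). $\Lambda(n,r)=\{\lambda\in\mathbb{N}^n:\sum_i\lambda_i=r\}$; for $\lambda\in\Lambda(n,r)$, $1_\lambda\in\hat S(n,r)$ is the projection of $V^{\otimes r}$ onto the span of those $e_{t_1}\otimes\cdots\otimes e_{t_r}$ with $\#\{j: t_j\equiv i\pmod n\}=\lambda_i$ for all $i$.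 *)

theory Defs
  imports "HOL-Computational_Algebra.Polynomial" "HOL-Computational_Algebra.Fraction_Field"
begin

type_synonym K = "rat poly fract"

definition qq :: K where "qq = Fract [:0, 1:] 1"

text \<open>A vector of V^{\<otimes> r} is a finitely supported coefficient function on basis tuples
  e_{t_1} \<otimes> ... \<otimes> e_{t_r}, a tuple being an int list of length r.  Operators are maps
  on such coefficient functions; they are all taken to be 0 outside the space V^{\<otimes> r}.\<close>

type_synonym vec = "int list \<Rightarrow> K"
type_synonym op = "vec \<Rightarrow> vec"

definition tvecs :: "nat \<Rightarrow> vec set" where
  "tvecs r = {v. finite {t. v t \<noteq> 0} \<and> (\<forall>t. v t \<noteq> 0 \<longrightarrow> length t = r)}"

text \<open>Linear operator with matrix M: M s t is the coefficient of e_s in the image of e_t.\<close>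
definition mat_op :: "nat \<Rightarrow> (int list \<Rightarrow> int list \<Rightarrow> K) \<Rightarrow> op" where
  "mat_op r M v = (if v \<in> tvecs r
      then (\<lambda>s. if length s = r then (\<Sum>t\<in>{t. v t \<noteq> 0}. M s t * v t) else 0)
      else (\<lambda>_. 0))"

definition cng :: "nat \<Rightarrow> int \<Rightarrow> int \<Rightarrow> bool" where
  "cng n a b \<longleftrightarrow> a mod int n = b mod int n"

definition sId :: "int \<Rightarrow> int \<Rightarrow> K" where
  "sId s t = (if s = t then 1 else 0)"

text \<open>E_i e_{t+1} = e_t if i \<equiv> t (mod n)\<close>
definition sE :: "nat \<Rightarrow> int \<Rightarrow> int \<Rightarrow> int \<Rightarrow> K" where
  "sE n i s t = (if t = s + 1 \<and> cng n i s then 1 else 0)"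

text \<open>E_{-i} e_t = e_{t+1} if i \<equiv> t (mod n)\<close>
definition sF :: "nat \<Rightarrow> int \<Rightarrow> int \<Rightarrow> int \<Rightarrow> K" where
  "sF n i s t = (if s = t + 1 \<and> cng n i t then 1 else 0)"

text \<open>K_i^{e} (e = 1 or -1): e_t \<mapsto> q^e e_t if i \<equiv> t, else e_t\<close>
definition sK :: "nat \<Rightarrow> int \<Rightarrow> int \<Rightarrow> int \<Rightarrow> int \<Rightarrow> K" where
  "sK n i e s t = (if s = t then (if cng n i t then qq powi e else 1) else 0)"

definition sKt :: "nat \<Rightarrow> int \<Rightarrow> int \<Rightarrow> int \<Rightarrow> int \<Rightarrow> K" where
  "sKt n i e s t = sK n i e s t * sK n (i + 1) (- e) s t"

definition sR :: "int \<Rightarrow> int \<Rightarrow> int \<Rightarrow> K" where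
  "sR d s t = (if s = t + d then 1 else 0)"

text \<open>Matrix coefficient of a pure tensor X_0 \<otimes> ... \<otimes> X_{r-1} of single-factor operators.\<close>
definition tprod :: "nat \<Rightarrow> (nat \<Rightarrow> int \<Rightarrow> int \<Rightarrow> K) \<Rightarrow> int list \<Rightarrow> int list \<Rightarrow> K" where
  "tprod r F s t = (\<Prod>k<r. F k (s ! k) (t ! k))"

text \<open>Delta^{(r)}(E_i) = \<Sum>_j 1^{\<otimes> j} \<otimes> E_i \<otimes> (K_i K_{i+1}^{-1})^{\<otimes>(r-1-j)}\<close>
definition psiE :: "nat \<Rightarrow> nat \<Rightarrow> int \<Rightarrow> op" where
  "psiE n r i = mat_op r (\<lambda>s t. \<Sum>j<r. tprod r
      (\<lambda>k. if k < j then sId else if k = j then sE n i else sKt n i 1) s t)"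

text \<open>Delta^{(r)}(E_{-i}) = \<Sum>_j (K_i^{-1} K_{i+1})^{\<otimes> j} \<otimes> E_{-i} \<otimes> 1^{\<otimes>(r-1-j)}\<close>
definition psiF :: "nat \<Rightarrow> nat \<Rightarrow> int \<Rightarrow> op" where
  "psiF n r i = mat_op r (\<lambda>s t. \<Sum>j<r. tprod r
      (\<lambda>k. if k < j then sKt n i (-1) else if k = j then sF n i else sId) s t)"

definition psiK :: "nat \<Rightarrow> nat \<Rightarrow> int \<Rightarrow> int \<Rightarrow> op" where
  "psiK n r i e = mat_op r (tprod r (\<lambda>k. sK n i e))"

definition psiR :: "nat \<Rightarrow> int \<Rightarrow> op" where
  "psiR r d = mat_op r (tprod r (\<lambda>k. sR d))"

definition psiId :: "nat \<Rightarrow> op" where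
  "psiId r = mat_op r (tprod r (\<lambda>k. sId))"

definition gens :: "nat \<Rightarrow> nat \<Rightarrow> op set" where
  "gens n r =
     {psiE n r i | i. i \<in> {1..int n}} \<union> {psiF n r i | i. i \<in> {1..int n}}
   \<union> {psiK n r i e | i e. i \<in> {1..int n} \<and> e \<in> {1, -1}}
   \<union> {psiR r d | d. d \<in> {1, -1}}"

inductive_set affSchur :: "nat \<Rightarrow> nat \<Rightarrow> op set" for n r where
  gen: "X \<in> gens n r \<Longrightarrow> X \<in> affSchur n r"
| one: "psiId r \<in> affSchur n r"
| add: "X \<in> affSchur n r \<Longrightarrow> Y \<in> affSchur n r \<Longrightarrow> (\<lambda>v s. X v s + Y v s) \<in> affSchur n r"
| smult: "X \<in> affSchur n r \<Longrightarrow> (\<lambda>v s. c * X v s) \<in> affSchur n r"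
| mult: "X \<in> affSchur n r \<Longrightarrow> Y \<in> affSchur n r \<Longrightarrow> X \<circ> Y \<in> affSchur n r"

text \<open>1_lambda for lambda \<in> Lambda(n,r) (lambda given as a function on residues 1..n)\<close>
definition wtproj :: "nat \<Rightarrow> nat \<Rightarrow> (int \<Rightarrow> nat) \<Rightarrow> op" where
  "wtproj n r lam = mat_op r (\<lambda>s t. if s = t \<and>
      (\<forall>i\<in>{1..int n}. card {j. j < r \<and> cng n (t ! j) i} = lam i) then 1 else 0)"

definition one_r :: "nat \<Rightarrow> nat \<Rightarrow> op" where
  "one_r n r = wtproj n r (\<lambda>i. if i \<le> int r then 1 else 0)"

definition qalg :: "(K \<Rightarrow> 'a::ring_1 \<Rightarrow> 'a) \<Rightarrow> bool" where
  "qalg sA \<longleftrightarrow>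
     (\<forall>c x y. sA c (x + y) = sA c x + sA c y) \<and>
     (\<forall>c d x. sA (c + d) x = sA c x + sA d x) \<and>
     (\<forall>c d x. sA (c * d) x = sA c (sA d x)) \<and>
     (\<forall>x. sA 1 x = x) \<and>
     (\<forall>c x y. sA c (x * y) = sA c x * y) \<and>
     (\<forall>c x y. sA c (x * y) = x * sA c y)"

definition qalg_hom_on :: "op set \<Rightarrow> (K \<Rightarrow> 'a::ring_1 \<Rightarrow> 'a) \<Rightarrow> (op \<Rightarrow> 'a) \<Rightarrow> bool" where
  "qalg_hom_on S sA f \<longleftrightarrow>
     (\<forall>X\<in>S. \<forall>Y\<in>S. f (\<lambda>v s. X v s + Y v s) = f X + f Y) \<and>
     (\<forall>X\<in>S. \<forall>Y\<in>S. f (X \<circ> Y) = f X * f Y) \<and>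
     (\<forall>c. \<forall>X\<in>S. f (\<lambda>v s. c * X v s) = sA c (f X))"

end

theory Submission
  imports Defs
begin

(*
  Every element of the affine q-Schur algebra S = S(n,r) acts on V^{\<otimes>r} by a banded matrix, and
  S is closed under transposition, because the transpose of E_i is q K_i K_{i+1}^{-1} F_i and the
  transpose of F_i is q K_i^{-1} K_{i+1} E_i.  Lagrange interpolation in the eigenvalues q^m of the
  K_i shows 1_r \<in> S.  Since n > r, every basis vector e_t is a nonzero multiple of X e_u for some
  X \<in> S and some e_u with 1_r e_u = e_u: single tensor factors whose residue is not shared are moved
  by E_i or F_i, and a free residue always exists.  So if D \<in> S has a nonzero entry D_{s,t}, there
  are Y, Z \<in> S such that 1_r Y D Z 1_r has a nonzero entry.  If f D = 0, then f also kills this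
  element of 1_r S 1_r, which therefore vanishes by injectivity; hence f is injective on S.
*)

section \<open>Banded matrices\<close>

type_synonym mat = "int list \<Rightarrow> int list \<Rightarrow> K"

definition supp :: "vec \<Rightarrow> int list set" where
  "supp v = {t. v t \<noteq> 0}"

definition banded_by :: "nat \<Rightarrow> int \<Rightarrow> mat \<Rightarrow> bool" where
  "banded_by r B M \<longleftrightarrow>
     (\<forall>s t. length s = r \<longrightarrow> length t = r \<longrightarrow> M s t \<noteq> 0 \<longrightarrow> (\<forall>k<r. \<bar>s!k - t!k\<bar> \<le> B))"

text \<open>Banded matrices have finite columns, so they act on finitely supported vectors and
  can be multiplied; every element of the affine q-Schur algebra is of this form.\<close>
definition banded :: "nat \<Rightarrow> mat \<Rightarrow> bool" where
  "banded r M \<longleftrightarrow> (\<exists>B. banded_by r B M)"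

definition column :: "nat \<Rightarrow> mat \<Rightarrow> int list \<Rightarrow> int list set" where
  "column r M t = {s. length s = r \<and> M s t \<noteq> 0}"

definition mat_mult :: "nat \<Rightarrow> mat \<Rightarrow> mat \<Rightarrow> mat" where
  "mat_mult r M N s t = (\<Sum>u\<in>column r N t. M s u * N u t)"

definition basis_vec :: "int list \<Rightarrow> vec" where
  "basis_vec t = (\<lambda>x. if x = t then 1 else 0)"

definition diagonal :: "nat \<Rightarrow> mat \<Rightarrow> bool" where
  "diagonal r D \<longleftrightarrow> (\<forall>s u. length s = r \<longrightarrow> length u = r \<longrightarrow> s \<noteq> u \<longrightarrow> D s u = 0)"

definition transposed :: "nat \<Rightarrow> mat \<Rightarrow> mat \<Rightarrow> bool" where
  "transposed r M' M \<longleftrightarrow> (\<forall>s t. length s = r \<longrightarrow> length t = r \<longrightarrow> M' s t = M t s)"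

lemma finite_lists_near:
  fixes B :: int
  assumes "length t = r"
  shows "finite {s. length s = r \<and> (\<forall>k<r. \<bar>s!k - t!k\<bar> \<le> B)}"
proof -
  define C where "C = B + (\<Sum>k<r. \<bar>t!k\<bar>)"
  have "{s. length s = r \<and> (\<forall>k<r. \<bar>s!k - t!k\<bar> \<le> B)} \<subseteq> {s. set s \<subseteq> {-C..C} \<and> length s = r}"
  proof
    fix s assume s: "s \<in> {s. length s = r \<and> (\<forall>k<r. \<bar>s!k - t!k\<bar> \<le> B)}"
    have "set s \<subseteq> {-C..C}"
    proof
      fix x assume "x \<in> set s"
      then obtain k where k: "k < r" "s!k = x" using s by (auto simp: in_set_conv_nth)
      have "\<bar>t!k\<bar> \<le> (\<Sum>k<r. \<bar>t!k\<bar>)"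
        by (rule member_le_sum[where f = "\<lambda>k. \<bar>t!k\<bar>"]) (use k in auto)
      moreover have "\<bar>x - t!k\<bar> \<le> B" using s k by auto
      ultimately show "x \<in> {-C..C}" unfolding C_def by auto
    qed
    then show "s \<in> {s. set s \<subseteq> {-C..C} \<and> length s = r}" using s by simp
  qed
  moreover have "finite {s. set s \<subseteq> {-C..C} \<and> length s = r}"
    by (rule finite_lists_length_eq) auto
  ultimately show ?thesis by (rule finite_subset)
qed

lemma finite_column:
  assumes "banded r M" "length t = r"
  shows "finite (column r M t)"
proof -
  obtain B where "banded_by r B M" using assms(1) unfolding banded_def by blast
  then have "column r M t \<subseteq> {s. length s = r \<and> (\<forall>k<r. \<bar>s!k - t!k\<bar> \<le> B)}"
    using assms(2) by (auto simp: column_def banded_by_def)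
  then show ?thesis using finite_lists_near[OF assms(2)] finite_subset by blast
qed

lemma tvecsD:
  assumes "v \<in> tvecs r"
  shows "finite (supp v)" "\<And>t. t \<in> supp v \<Longrightarrow> length t = r"
  using assms by (auto simp: tvecs_def supp_def)

lemma mat_op_tvecs:
  "v \<in> tvecs r \<Longrightarrow> mat_op r M v = (\<lambda>s. if length s = r then (\<Sum>t\<in>supp v. M s t * v t) else 0)"
  unfolding mat_op_def supp_def by simp

lemma mat_op_not_tvecs: "v \<notin> tvecs r \<Longrightarrow> mat_op r M v = (\<lambda>_. 0)"
  by (simp add: mat_op_def)

lemma mat_op_zero_vec: "mat_op r M (\<lambda>_. 0) = (\<lambda>_. 0)"
  unfolding mat_op_def tvecs_def by auto

lemma mat_op_zero_mat: "mat_op r (\<lambda>s t. 0) = (\<lambda>v s. 0)"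
  by (auto simp: mat_op_def intro!: ext)

lemma supp_mat_op_subset:
  assumes "v \<in> tvecs r"
  shows "supp (mat_op r M v) \<subseteq> (\<Union>t\<in>supp v. column r M t)"
proof
  fix s assume "s \<in> supp (mat_op r M v)"
  then have "length s = r" and "(\<Sum>t\<in>supp v. M s t * v t) \<noteq> 0"
    by (auto simp: supp_def mat_op_tvecs[OF assms] split: if_splits)
  then obtain t where "t \<in> supp v" "M s t * v t \<noteq> 0" by (meson sum.neutral)
  with \<open>length s = r\<close> show "s \<in> (\<Union>t\<in>supp v. column r M t)" by (auto simp: column_def)
qed

lemma mat_op_in_tvecs:
  assumes "banded r M" "v \<in> tvecs r"
  shows "mat_op r M v \<in> tvecs r"
proof -
  have "finite (\<Union>t\<in>supp v. column r M t)"
    using tvecsD[OF assms(2)] finite_column[OF assms(1)] by auto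
  then have "finite (supp (mat_op r M v))"
    using supp_mat_op_subset[OF assms(2)] by (rule finite_subset[rotated])
  then show ?thesis by (auto simp: tvecs_def supp_def mat_op_tvecs[OF assms(2)])
qed

lemma banded_mat_mult:
  assumes "banded r M" "banded r N"
  shows "banded r (mat_mult r M N)"
proof -
  obtain B1 B2 where B1: "banded_by r B1 M" and B2: "banded_by r B2 N"
    using assms unfolding banded_def by blast
  show ?thesis unfolding banded_def banded_by_def
  proof (intro exI allI impI)
    fix s t k
    assume "length s = r" "length t = r" "mat_mult r M N s t \<noteq> 0" "k < r"
    moreover from \<open>mat_mult r M N s t \<noteq> 0\<close> obtain u where "u \<in> column r N t" "M s u * N u t \<noteq> 0"
      unfolding mat_mult_def by (meson sum.neutral)
    ultimately have "\<bar>s!k - u!k\<bar> \<le> B1" "\<bar>u!k - t!k\<bar> \<le> B2"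
      using B1 B2 by (auto simp: column_def banded_by_def)
    then show "\<bar>s!k - t!k\<bar> \<le> B1 + B2" by linarith
  qed
qed

lemma mat_mult_eq_sum_superset:
  assumes "finite U" "\<And>u. u \<in> U \<Longrightarrow> length u = r"
    "\<And>u. length u = r \<Longrightarrow> M s u * N u t \<noteq> 0 \<Longrightarrow> u \<in> U" "banded r N" "length t = r"
  shows "mat_mult r M N s t = (\<Sum>u\<in>U. M s u * N u t)"
proof -
  have "mat_mult r M N s t = (\<Sum>u\<in>U \<union> column r N t. M s u * N u t)"
    unfolding mat_mult_def
    by (rule sum.mono_neutral_left) (use assms finite_column in \<open>auto simp: column_def\<close>)
  also have "\<dots> = (\<Sum>u\<in>U. M s u * N u t)"
    by (rule sum.mono_neutral_right) (use assms finite_column in \<open>auto simp: column_def\<close>)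
  finally show ?thesis .
qed

lemma mat_op_mat_op_apply:
  assumes "banded r M" "banded r N" "v \<in> tvecs r" "length s = r"
  shows "mat_op r M (mat_op r N v) s = (\<Sum>t\<in>supp v. mat_mult r M N s t * v t)"
proof -
  define w where "w = mat_op r N v"
  define U where "U = (\<Union>t\<in>supp v. column r N t)"
  have w: "w \<in> tvecs r" using mat_op_in_tvecs[OF assms(2,3)] by (simp add: w_def)
  have fin_U: "finite U" using tvecsD[OF assms(3)] finite_column[OF assms(2)] by (auto simp: U_def)
  have len_U: "\<And>u. u \<in> U \<Longrightarrow> length u = r" by (auto simp: U_def column_def)
  have supp_w: "supp w \<subseteq> U" using supp_mat_op_subset[OF assms(3)] by (simp add: w_def U_def)
  have "mat_op r M w s = (\<Sum>u\<in>supp w. M s u * w u)"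
    using assms(4) by (simp add: mat_op_tvecs[OF w])
  also have "\<dots> = (\<Sum>u\<in>U. M s u * w u)"
    by (rule sum.mono_neutral_left[OF fin_U supp_w]) (auto simp: supp_def)
  also have "\<dots> = (\<Sum>u\<in>U. \<Sum>t\<in>supp v. M s u * N u t * v t)"
    by (intro sum.cong) (auto simp: w_def mat_op_tvecs[OF assms(3)] len_U sum_distrib_left mult.assoc)
  also have "\<dots> = (\<Sum>t\<in>supp v. \<Sum>u\<in>U. M s u * N u t * v t)" by (rule sum.swap)
  also have "\<dots> = (\<Sum>t\<in>supp v. mat_mult r M N s t * v t)"
  proof (intro sum.cong refl)
    fix t assume t: "t \<in> supp v"
    have in_U: "u \<in> U" if "length u = r" "M s u * N u t \<noteq> 0" for u
      using t that by (auto simp: U_def column_def)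
    have "mat_mult r M N s t = (\<Sum>u\<in>U. M s u * N u t)"
      by (rule mat_mult_eq_sum_superset[OF fin_U len_U in_U assms(2) tvecsD(2)[OF assms(3) t]])
    then show "(\<Sum>u\<in>U. M s u * N u t * v t) = mat_mult r M N s t * v t"
      by (simp add: sum_distrib_right)
  qed
  finally show ?thesis by (simp add: w_def)
qed

lemma mat_op_mat_mult:
  assumes "banded r M" "banded r N"
  shows "mat_op r (mat_mult r M N) = mat_op r M \<circ> mat_op r N"
proof (intro ext)
  fix v s
  show "mat_op r (mat_mult r M N) v s = (mat_op r M \<circ> mat_op r N) v s"
  proof (cases "v \<in> tvecs r")
    case True
    have "mat_op r N v \<in> tvecs r" by (rule mat_op_in_tvecs[OF assms(2) True])
    then show ?thesis
      using mat_op_mat_op_apply[OF assms True, of s] by (simp add: mat_op_tvecs[OF True] mat_op_tvecs)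
  qed (simp add: mat_op_not_tvecs mat_op_zero_vec)
qed

lemma mat_op_basis_vec:
  assumes "length t = r" "length s = r"
  shows "mat_op r M (basis_vec t) s = M s t"
proof -
  have "basis_vec t \<in> tvecs r" using assms(1) by (auto simp: tvecs_def basis_vec_def)
  moreover have "supp (basis_vec t) = {t}" by (auto simp: supp_def basis_vec_def)
  ultimately show ?thesis using assms(2) by (simp add: mat_op_tvecs basis_vec_def)
qed

lemma mat_op_eq_iff:
  "mat_op r M = mat_op r N \<longleftrightarrow> (\<forall>s t. length s = r \<longrightarrow> length t = r \<longrightarrow> M s t = N s t)"
proof
  assume "mat_op r M = mat_op r N"
  then show "\<forall>s t. length s = r \<longrightarrow> length t = r \<longrightarrow> M s t = N s t" by (metis mat_op_basis_vec)
next
  assume eq: "\<forall>s t. length s = r \<longrightarrow> length t = r \<longrightarrow> M s t = N s t"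
  show "mat_op r M = mat_op r N"
  proof
    fix v show "mat_op r M v = mat_op r N v"
    proof (cases "v \<in> tvecs r")
      case True
      then show ?thesis using eq tvecsD(2)[OF True] by (auto simp: mat_op_tvecs intro!: sum.cong)
    qed (simp add: mat_op_not_tvecs)
  qed
qed

lemma mat_op_add: "(\<lambda>v s. mat_op r M v s + mat_op r N v s) = mat_op r (\<lambda>s t. M s t + N s t)"
  by (auto simp: mat_op_def sum.distrib distrib_right intro!: ext)

lemma mat_op_smult: "(\<lambda>v s. c * mat_op r M v s) = mat_op r (\<lambda>s t. c * M s t)"
  by (auto simp: mat_op_def sum_distrib_left mult.assoc intro!: ext)

lemma banded_add:
  assumes "banded r M" "banded r N"
  shows "banded r (\<lambda>s t. M s t + N s t)"
proof -
  obtain B1 B2 where B1: "banded_by r B1 M" and B2: "banded_by r B2 N"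
    using assms unfolding banded_def by blast
  show ?thesis unfolding banded_def banded_by_def
  proof (intro exI allI impI)
    fix s t k assume st: "length s = r" "length t = r" "M s t + N s t \<noteq> 0" and "k < r"
    then have "M s t \<noteq> 0 \<or> N s t \<noteq> 0" by auto
    then have "\<bar>s!k - t!k\<bar> \<le> B1 \<or> \<bar>s!k - t!k\<bar> \<le> B2"
      using B1 B2 st(1,2) \<open>k < r\<close> unfolding banded_by_def by blast
    then show "\<bar>s!k - t!k\<bar> \<le> max B1 B2" by linarith
  qed
qed

lemma banded_smult: "banded r M \<Longrightarrow> banded r (\<lambda>s t. c * M s t)"
  unfolding banded_def banded_by_def by auto

lemma banded_sum:
  "finite J \<Longrightarrow> (\<And>j. j \<in> J \<Longrightarrow> banded r (M j)) \<Longrightarrow> banded r (\<lambda>s t. \<Sum>j\<in>J. M j s t)"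
proof (induction J rule: finite_induct)
  case empty
  then show ?case by (auto simp: banded_def banded_by_def)
next
  case (insert x F)
  then have "banded r (\<lambda>s t. M x s t + (\<Sum>j\<in>F. M j s t))" by (intro banded_add) auto
  then show ?case using insert by simp
qed

lemma diagonal_imp_banded: "diagonal r D \<Longrightarrow> banded r D"
  unfolding banded_def banded_by_def diagonal_def by (intro exI[of _ 0]) auto

lemma mat_mult_diagonal_left:
  assumes "diagonal r D" "banded r N" "length s = r" "length t = r"
  shows "mat_mult r D N s t = D s s * N s t"
proof (cases "N s t = 0")
  case True
  then have "\<forall>u\<in>column r N t. D s u * N u t = 0"
    using assms unfolding diagonal_def column_def by auto
  then show ?thesis using True by (auto simp: mat_mult_def intro!: sum.neutral)
next
  case False
  then have s: "s \<in> column r N t" using assms by (simp add: column_def)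
  have "mat_mult r D N s t = (\<Sum>u\<in>column r N t. if u = s then D s s * N s t else 0)"
    unfolding mat_mult_def using assms(1,3) by (intro sum.cong) (auto simp: diagonal_def column_def)
  also have "\<dots> = D s s * N s t" using s finite_column[OF assms(2,4)] by simp
  finally show ?thesis .
qed

lemma mat_mult_diagonal_right:
  assumes "diagonal r D" "length t = r"
  shows "mat_mult r N D s t = N s t * D t t"
proof -
  have "column r D t \<subseteq> {t}" using assms unfolding diagonal_def column_def by auto
  then have "column r D t = {} \<or> column r D t = {t}" by blast
  then show ?thesis
  proof
    assume "column r D t = {}"
    then show ?thesis using assms(2) by (simp add: mat_mult_def column_def)
  qed (simp add: mat_mult_def)
qed

lemma mat_mult_unit_column:
  assumes "length u = r" "\<alpha> \<noteq> 0" "\<And>x. length x = r \<Longrightarrow> N x u = (if x = t then \<alpha> else 0)"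
    "length t = r"
  shows "mat_mult r A N y u = A y t * \<alpha>"
proof -
  have "column r N u = {t}" using assms by (auto simp: column_def split: if_splits)
  then show ?thesis using assms by (simp add: mat_mult_def)
qed

lemma mat_mult_unit_row:
  assumes "banded r N" "length u = r" "length s = r"
    "\<And>y. length y = r \<Longrightarrow> A x y = (if y = s then \<beta> else 0)"
  shows "mat_mult r A N x u = \<beta> * N s u"
proof -
  have "mat_mult r A N x u = (\<Sum>y\<in>column r N u \<union> {s}. A x y * N y u)"
    unfolding mat_mult_def
    by (rule sum.mono_neutral_left) (use assms finite_column in \<open>auto simp: column_def\<close>)
  also have "\<dots> = (\<Sum>y\<in>column r N u \<union> {s}. if y = s then \<beta> * N s u else 0)"
    using assms(3,4) by (intro sum.cong) (auto simp: column_def)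
  also have "\<dots> = \<beta> * N s u" using finite_column[OF assms(1,2)] by simp
  finally show ?thesis .
qed

lemma banded_transposed: "banded r M \<Longrightarrow> transposed r M' M \<Longrightarrow> banded r M'"
  unfolding banded_def banded_by_def transposed_def by (metis abs_minus_commute)

lemma transposed_mat_mult:
  assumes "banded r M1" "banded r M2" "banded r M1'" "transposed r M1' M1" "transposed r M2' M2"
  shows "transposed r (mat_mult r M2' M1') (mat_mult r M1 M2)"
  unfolding transposed_def
proof (intro allI impI)
  fix s t :: "int list" assume s: "length s = r" and t: "length t = r"
  have "mat_mult r M1 M2 t s = (\<Sum>u\<in>column r M2 s. M2' s u * M1' u t)"
    unfolding mat_mult_def using assms(4,5) s t
    by (intro sum.cong) (auto simp: transposed_def column_def)
  also have "\<dots> = mat_mult r M2' M1' s t"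
    using finite_column[OF assms(2) s] assms(4,5) s t
    by (intro mat_mult_eq_sum_superset[symmetric] assms(3)) (auto simp: column_def transposed_def)
  finally show "mat_mult r M2' M1' s t = mat_mult r M1 M2 t s" ..
qed

lemma transposed_add:
  "transposed r A' A \<Longrightarrow> transposed r B' B \<Longrightarrow>
    transposed r (\<lambda>s t. A' s t + B' s t) (\<lambda>s t. A s t + B s t)"
  unfolding transposed_def by simp

lemma transposed_smult:
  "transposed r A' A \<Longrightarrow> transposed r (\<lambda>s t. c * A' s t) (\<lambda>s t. c * A s t)"
  unfolding transposed_def by simp

lemma transposed_diagonal: "diagonal r D \<Longrightarrow> transposed r D D"
  unfolding diagonal_def transposed_def by metis

section \<open>Matrices of the generators\<close>

definition matE :: "nat \<Rightarrow> nat \<Rightarrow> int \<Rightarrow> mat" where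
  "matE n r i = (\<lambda>s t. \<Sum>j<r. tprod r
      (\<lambda>k. if k < j then sId else if k = j then sE n i else sKt n i 1) s t)"

definition matF :: "nat \<Rightarrow> nat \<Rightarrow> int \<Rightarrow> mat" where
  "matF n r i = (\<lambda>s t. \<Sum>j<r. tprod r
      (\<lambda>k. if k < j then sKt n i (-1) else if k = j then sF n i else sId) s t)"

definition matK :: "nat \<Rightarrow> nat \<Rightarrow> int \<Rightarrow> int \<Rightarrow> mat" where
  "matK n r i e = tprod r (\<lambda>k. sK n i e)"

definition matR :: "nat \<Rightarrow> int \<Rightarrow> mat" where
  "matR r d = tprod r (\<lambda>k. sR d)"

definition matId :: "nat \<Rightarrow> mat" where
  "matId r = tprod r (\<lambda>k. sId)"

lemma psiE_eq: "psiE n r i = mat_op r (matE n r i)" unfolding psiE_def matE_def ..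
lemma psiF_eq: "psiF n r i = mat_op r (matF n r i)" unfolding psiF_def matF_def ..
lemma psiK_eq: "psiK n r i e = mat_op r (matK n r i e)" unfolding psiK_def matK_def ..
lemma psiR_eq: "psiR r d = mat_op r (matR r d)" unfolding psiR_def matR_def ..
lemma psiId_eq: "psiId r = mat_op r (matId r)" unfolding psiId_def matId_def ..

definition near_diag :: "(int \<Rightarrow> int \<Rightarrow> K) \<Rightarrow> bool" where
  "near_diag F \<longleftrightarrow> (\<forall>a b. F a b \<noteq> 0 \<longrightarrow> \<bar>a - b\<bar> \<le> 1)"

lemma tprod_nonzeroD: "tprod r F s t \<noteq> 0 \<Longrightarrow> k < r \<Longrightarrow> F k (s!k) (t!k) \<noteq> 0"
  unfolding tprod_def by (metis finite_lessThan lessThan_iff prod_zero_iff)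

lemma banded_tprod: "(\<And>k. near_diag (F k)) \<Longrightarrow> banded r (tprod r F)"
  unfolding banded_def banded_by_def near_diag_def by (metis tprod_nonzeroD)

lemma diagonal_tprod:
  assumes "\<And>k a b. a \<noteq> b \<Longrightarrow> F k a b = 0"
  shows "diagonal r (tprod r F)"
  unfolding diagonal_def
proof (intro allI impI)
  fix s u :: "int list" assume "length s = r" "length u = r" "s \<noteq> u"
  then obtain k where "k < r" "s!k \<noteq> u!k" by (metis nth_equalityI)
  then show "tprod r F s u = 0" using tprod_nonzeroD assms by blast
qed

lemma near_diag_sId: "near_diag sId" by (simp add: near_diag_def sId_def)
lemma near_diag_sE: "near_diag (sE n i)" by (simp add: near_diag_def sE_def)
lemma near_diag_sF: "near_diag (sF n i)" by (simp add: near_diag_def sF_def)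
lemma near_diag_sK: "near_diag (sK n i e)" by (simp add: near_diag_def sK_def)
lemma near_diag_sKt: "near_diag (sKt n i e)" by (simp add: near_diag_def sKt_def sK_def)
lemma near_diag_sR: "d \<in> {1, -1} \<Longrightarrow> near_diag (sR d)" by (auto simp: near_diag_def sR_def)

lemma banded_matE: "banded r (matE n r i)"
  unfolding matE_def by (intro banded_sum banded_tprod) (auto simp: near_diag_sId near_diag_sE near_diag_sKt)
lemma banded_matF: "banded r (matF n r i)"
  unfolding matF_def by (intro banded_sum banded_tprod) (auto simp: near_diag_sId near_diag_sF near_diag_sKt)
lemma banded_matK: "banded r (matK n r i e)"
  unfolding matK_def by (intro banded_tprod near_diag_sK)
lemma banded_matR: "d \<in> {1, -1} \<Longrightarrow> banded r (matR r d)"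
  unfolding matR_def by (intro banded_tprod near_diag_sR)
lemma banded_matId: "banded r (matId r)"
  unfolding matId_def by (intro banded_tprod near_diag_sId)

lemma diagonal_matK: "diagonal r (matK n r i e)"
  unfolding matK_def by (rule diagonal_tprod) (simp add: sK_def)
lemma diagonal_matId: "diagonal r (matId r)"
  unfolding matId_def by (rule diagonal_tprod) (simp add: sId_def)

lemma matId_eq: "length s = r \<Longrightarrow> length t = r \<Longrightarrow> matId r s t = (if s = t then 1 else 0)"
  using diagonal_matId[of r] unfolding diagonal_def by (auto simp: matId_def tprod_def sId_def)

lemma qq_neq_0: "qq \<noteq> 0"
  by (simp add: qq_def Zero_fract_def eq_fract)

lemma cng_add_one: "cng n a b \<Longrightarrow> cng n (a + 1) (b + 1)"
  unfolding cng_def by (metis mod_add_cong)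

lemma not_cng_add_one:
  assumes "n \<ge> 2"
  shows "\<not> cng n a (a + 1)"
proof
  assume "cng n a (a + 1)"
  then have "int n dvd (a + 1) - a" unfolding cng_def by (metis mod_eq_dvd_iff)
  with assms show False by simp
qed

lemma cng_sym: "cng n a b = cng n b a" unfolding cng_def by auto
lemma cng_trans: "cng n a b \<Longrightarrow> cng n b c \<Longrightarrow> cng n a c" unfolding cng_def by simp

lemma sKt_diag_inverse: "sKt n i 1 a a * sKt n i (-1) a a = 1"
  unfolding sKt_def sK_def using qq_neq_0 by (auto simp: power_int_minus)

lemma sKt_off_diag: "a \<noteq> b \<Longrightarrow> sKt n i e a b = 0"
  unfolding sKt_def sK_def by simp

lemma sKt_diag_neq_0: "sKt n i e a a \<noteq> 0"
  unfolding sKt_def sK_def using qq_neq_0 by auto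

lemma sKt_at_residue:
  assumes "n \<ge> 2" "cng n i a"
  shows "sKt n i (-1) a a = inverse qq" "sKt n i 1 (a + 1) (a + 1) = inverse qq"
proof -
  have "\<not> cng n i (a + 1)" "cng n (i + 1) (a + 1)"
    using assms(2) not_cng_add_one[OF assms(1), of a] cng_add_one[OF assms(2)]
    by (auto simp: cng_def)
  moreover have "\<not> cng n (i + 1) a"
    using \<open>cng n (i + 1) (a + 1)\<close> not_cng_add_one[OF assms(1), of a] by (auto simp: cng_def)
  ultimately show "sKt n i (-1) a a = inverse qq" "sKt n i 1 (a + 1) (a + 1) = inverse qq"
    using assms(2) by (simp_all add: sKt_def sK_def power_int_minus)
qed

text \<open>Factorwise form of the transposition identities: transposing the j-th summand of the
  coproduct of E_i gives q K_i K_{i+1}^{-1} times the j-th summand of the coproduct of F_i.\<close>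
lemma sE_factor_transpose:
  fixes k j :: nat
  assumes "n \<ge> 2"
  shows "(if k < j then sId else if k = j then sE n i else sKt n i 1) b a =
    (if k = j then qq else 1) *
      (sKt n i 1 a a * (if k < j then sKt n i (-1) else if k = j then sF n i else sId) a b)"
proof -
  consider "k < j" | "k = j" | "j < k" by linarith
  then show ?thesis
  proof cases
    case 1
    then show ?thesis
      using sKt_diag_inverse[of n i a] sKt_off_diag[of a b n i "-1"] by (auto simp: sId_def)
  next
    case 2
    then show ?thesis
      using sKt_at_residue(2)[OF assms, of i b] qq_neq_0 by (auto simp: sE_def sF_def)
  next
    case 3
    then show ?thesis using sKt_off_diag[of b a n i 1] by (auto simp: sId_def)
  qed
qed

lemma sF_factor_transpose:
  fixes k j :: nat
  assumes "n \<ge> 2"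
  shows "(if k < j then sKt n i (-1) else if k = j then sF n i else sId) b a =
    (if k = j then qq else 1) *
      (sKt n i (-1) a a * (if k < j then sId else if k = j then sE n i else sKt n i 1) a b)"
proof -
  consider "k < j" | "k = j" | "j < k" by linarith
  then show ?thesis
  proof cases
    case 1
    then show ?thesis using sKt_off_diag[of b a n i "-1"] by (auto simp: sId_def)
  next
    case 2
    then show ?thesis
      using sKt_at_residue(1)[OF assms, of i a] qq_neq_0 by (auto simp: sE_def sF_def)
  next
    case 3
    then show ?thesis
      using sKt_off_diag[of a b n i 1] sKt_diag_inverse[of n i a] by (auto simp: sId_def mult.commute)
  qed
qed

lemma tprod_transpose_by_factors:
  assumes "\<And>k. F k (t!k) (s!k) = (if k = j then qq else 1) * (D (s!k) * G k (s!k) (t!k))"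
    "j < r"
  shows "tprod r F t s = qq * (tprod r (\<lambda>k a b. D a) s s * tprod r G s t)"
proof -
  have "tprod r F t s = (\<Prod>k<r. (if k = j then qq else 1) * (D (s!k) * G k (s!k) (t!k)))"
    unfolding tprod_def using assms(1) by (intro prod.cong) auto
  also have "\<dots> = qq * (tprod r (\<lambda>k a b. D a) s s * tprod r G s t)"
    using assms(2) by (simp add: tprod_def prod.distrib prod.delta)
  finally show ?thesis .
qed

lemma tprod_sKt_diag:
  "tprod r (\<lambda>k a b. sKt n i e a a) s s = matK n r i e s s * matK n r (i + 1) (- e) s s"
  unfolding matK_def tprod_def sKt_def by (simp add: prod.distrib)

lemma matE_transpose:
  assumes "n \<ge> 2"
  shows "matE n r i t s = qq * (matK n r i 1 s s * (matK n r (i + 1) (-1) s s * matF n r i s t))"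
proof -
  have "matE n r i t s = (\<Sum>j<r. qq * (tprod r (\<lambda>k a b. sKt n i 1 a a) s s *
      tprod r (\<lambda>k. if k < j then sKt n i (-1) else if k = j then sF n i else sId) s t))"
    unfolding matE_def
    by (intro sum.cong refl tprod_transpose_by_factors[where D = "\<lambda>a. sKt n i 1 a a"])
      (simp_all only: sE_factor_transpose[OF assms] lessThan_iff)
  then show ?thesis by (simp add: matF_def tprod_sKt_diag sum_distrib_left mult.assoc)
qed

lemma matF_transpose:
  assumes "n \<ge> 2"
  shows "matF n r i t s = qq * (matK n r i (-1) s s * (matK n r (i + 1) 1 s s * matE n r i s t))"
proof -
  have "matF n r i t s = (\<Sum>j<r. qq * (tprod r (\<lambda>k a b. sKt n i (-1) a a) s s *
      tprod r (\<lambda>k. if k < j then sId else if k = j then sE n i else sKt n i 1) s t))"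
    unfolding matF_def
    by (intro sum.cong refl tprod_transpose_by_factors[where D = "\<lambda>a. sKt n i (-1) a a"])
      (simp_all only: sF_factor_transpose[OF assms] lessThan_iff)
  then show ?thesis by (simp add: matE_def tprod_sKt_diag sum_distrib_left mult.assoc)
qed

lemma exists_cng_in_range: "n > 0 \<Longrightarrow> \<exists>i0\<in>{1..int n}. cng n i i0"
proof -
  assume n: "n > 0"
  show ?thesis
  proof (cases "i mod int n = 0")
    case True
    then show ?thesis using n by (intro bexI[of _ "int n"]) (auto simp: cng_def)
  next
    case False
    moreover have "0 \<le> i mod int n" "i mod int n < int n" using n by auto
    ultimately show ?thesis by (intro bexI[of _ "i mod int n"]) (auto simp: cng_def)
  qed
qed

lemma psi_cng:
  assumes "cng n i i0"
  shows "psiE n r i = psiE n r i0" "psiF n r i = psiF n r i0" "psiK n r i e = psiK n r i0 e"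
proof -
  have c: "cng n i = cng n i0" and c1: "cng n (i + 1) = cng n (i0 + 1)"
    using assms cng_add_one[OF assms] by (auto simp: cng_def fun_eq_iff)
  have s: "sE n i = sE n i0" "sF n i = sF n i0" "sK n i = sK n i0" "sKt n i = sKt n i0"
    unfolding sE_def sF_def sKt_def sK_def c c1 by simp_all
  show "psiE n r i = psiE n r i0" "psiF n r i = psiF n r i0" "psiK n r i e = psiK n r i0 e"
    unfolding psiE_def psiF_def psiK_def s by simp_all
qed

lemma psi_in_affSchur:
  assumes "n > 0"
  shows "psiE n r i \<in> affSchur n r" "psiF n r i \<in> affSchur n r"
    "e \<in> {1, -1} \<Longrightarrow> psiK n r i e \<in> affSchur n r"
proof -
  obtain i0 where "i0 \<in> {1..int n}" and i0: "cng n i i0" using exists_cng_in_range[OF assms] by blast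
  then have "psiE n r i0 \<in> gens n r" "psiF n r i0 \<in> gens n r"
    "e \<in> {1, -1} \<Longrightarrow> psiK n r i0 e \<in> gens n r"
    unfolding gens_def by blast+
  then have "psiE n r i0 \<in> affSchur n r" "psiF n r i0 \<in> affSchur n r"
    "e \<in> {1, -1} \<Longrightarrow> psiK n r i0 e \<in> affSchur n r"
    by (simp_all add: affSchur.gen)
  then show "psiE n r i \<in> affSchur n r" "psiF n r i \<in> affSchur n r"
    "e \<in> {1, -1} \<Longrightarrow> psiK n r i e \<in> affSchur n r"
    by (simp_all add: psi_cng[OF i0])
qed

lemma psiR_in_affSchur: "d \<in> {1, -1} \<Longrightarrow> psiR r d \<in> affSchur n r"
  by (auto intro!: affSchur.gen simp: gens_def)

lemmas mat_in_affSchur = psi_in_affSchur[unfolded psiE_eq psiF_eq psiK_eq]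

section \<open>Closure under transposition\<close>

definition transposable :: "nat \<Rightarrow> nat \<Rightarrow> op \<Rightarrow> bool" where
  "transposable n r X \<longleftrightarrow> (\<exists>M M'. banded r M \<and> transposed r M' M \<and> X = mat_op r M \<and>
      mat_op r M' \<in> affSchur n r)"

lemma transposableI:
  "banded r M \<Longrightarrow> transposed r M' M \<Longrightarrow> mat_op r M' \<in> affSchur n r \<Longrightarrow>
    transposable n r (mat_op r M)"
  unfolding transposable_def by blast

lemma transposable_diagonal:
  "diagonal r D \<Longrightarrow> mat_op r D \<in> affSchur n r \<Longrightarrow> transposable n r (mat_op r D)"
  by (rule transposableI[OF diagonal_imp_banded transposed_diagonal])

lemma transposable_by_transpose_eq:
  assumes "n > 0" "e \<in> {1, -1}" "banded r M" "banded r N" "mat_op r N \<in> affSchur n r"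
    "\<And>s t. M t s = qq * (matK n r i e s s * (matK n r (i + 1) (- e) s s * N s t))"
  shows "transposable n r (mat_op r M)"
proof -
  define M' where
    "M' = (\<lambda>s t. qq * mat_mult r (matK n r i e) (mat_mult r (matK n r (i + 1) (- e)) N) s t)"
  have "transposed r M' M"
    unfolding transposed_def M'_def using assms(6)
    by (simp add: mat_mult_diagonal_left diagonal_matK banded_mat_mult banded_matK assms(4))
  moreover have "mat_op r M' = (\<lambda>v s. qq *
      (mat_op r (matK n r i e) \<circ> (mat_op r (matK n r (i + 1) (- e)) \<circ> mat_op r N)) v s)"
    unfolding M'_def mat_op_smult[symmetric]
    by (simp add: mat_op_mat_mult banded_mat_mult banded_matK assms(4))
  moreover have "mat_op r (matK n r i e) \<circ> (mat_op r (matK n r (i + 1) (- e)) \<circ> mat_op r N)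
      \<in> affSchur n r"
    using assms(1,2,5) by (intro affSchur.mult mat_in_affSchur) auto
  ultimately show ?thesis
    using transposableI[OF assms(3)] affSchur.smult by metis
qed

lemma transposable_psiE:
  assumes "n \<ge> 2"
  shows "transposable n r (psiE n r i)"
  unfolding psiE_eq using assms
  by (intro transposable_by_transpose_eq[where e = 1, OF _ _ banded_matE banded_matF _ matE_transpose])
    (auto intro: mat_in_affSchur)

lemma transposable_psiF:
  assumes "n \<ge> 2"
  shows "transposable n r (psiF n r i)"
proof -
  have "matF n r i t s = qq * (matK n r i (-1) s s * (matK n r (i + 1) (- (-1)) s s * matE n r i s t))"
    for s t using matF_transpose[OF assms] by simp
  moreover have "mat_op r (matE n r i) \<in> affSchur n r"
    using psi_in_affSchur(1)[of n r i] assms by (simp add: psiE_eq)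
  ultimately show ?thesis
    unfolding psiF_eq using assms
    by (intro transposable_by_transpose_eq[where e = "-1", OF _ _ banded_matF banded_matE]) auto
qed

lemma transposable_psiR:
  assumes "d \<in> {1, -1}"
  shows "transposable n r (psiR r d)"
proof -
  have "transposed r (matR r (-d)) (matR r d)"
    unfolding transposed_def matR_def tprod_def sR_def by (auto intro!: prod.cong)
  moreover have "-d \<in> {1, -1}" using assms by auto
  ultimately show ?thesis
    using assms psiR_in_affSchur[of "-d" r n] unfolding psiR_eq by (intro transposableI banded_matR)
qed

lemma transposable_add:
  assumes "transposable n r X" "transposable n r Y"
  shows "transposable n r (\<lambda>v s. X v s + Y v s)"
proof -
  obtain A A' B B' where
    A: "banded r A" "transposed r A' A" "X = mat_op r A" "mat_op r A' \<in> affSchur n r" and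
    B: "banded r B" "transposed r B' B" "Y = mat_op r B" "mat_op r B' \<in> affSchur n r"
    using assms unfolding transposable_def by blast
  have "mat_op r (\<lambda>s t. A' s t + B' s t) \<in> affSchur n r"
    using affSchur.add[OF A(4) B(4)] by (simp add: mat_op_add)
  then have "transposable n r (mat_op r (\<lambda>s t. A s t + B s t))"
    by (rule transposableI[OF banded_add[OF A(1) B(1)] transposed_add[OF A(2) B(2)]])
  then show ?thesis by (simp add: A(3) B(3) mat_op_add)
qed

lemma transposable_smult:
  assumes "transposable n r X"
  shows "transposable n r (\<lambda>v s. c * X v s)"
proof -
  obtain A A' where
    A: "banded r A" "transposed r A' A" "X = mat_op r A" "mat_op r A' \<in> affSchur n r"
    using assms unfolding transposable_def by blast
  have "mat_op r (\<lambda>s t. c * A' s t) \<in> affSchur n r"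
    using affSchur.smult[OF A(4)] by (simp add: mat_op_smult)
  then have "transposable n r (mat_op r (\<lambda>s t. c * A s t))"
    by (rule transposableI[OF banded_smult[OF A(1)] transposed_smult[OF A(2)]])
  then show ?thesis by (simp add: A(3) mat_op_smult)
qed

lemma transposable_comp:
  assumes "transposable n r X" "transposable n r Y"
  shows "transposable n r (X \<circ> Y)"
proof -
  obtain A A' B B' where
    A: "banded r A" "transposed r A' A" "X = mat_op r A" "mat_op r A' \<in> affSchur n r" and
    B: "banded r B" "transposed r B' B" "Y = mat_op r B" "mat_op r B' \<in> affSchur n r"
    using assms unfolding transposable_def by blast
  have A': "banded r A'" and B': "banded r B'" using A(1,2) B(1,2) banded_transposed by blast+
  have "mat_op r (mat_mult r B' A') \<in> affSchur n r"
    using affSchur.mult[OF B(4) A(4)] by (simp add: mat_op_mat_mult[OF B' A'])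
  then have "transposable n r (mat_op r (mat_mult r A B))"
    by (rule transposableI[OF banded_mat_mult[OF A(1) B(1)] transposed_mat_mult[OF A(1) B(1) A' A(2) B(2)]])
  then show ?thesis by (simp add: A(3) B(3) mat_op_mat_mult[OF A(1) B(1)])
qed

lemma affSchur_transposable:
  assumes "n \<ge> 2" "X \<in> affSchur n r"
  shows "transposable n r X"
  using assms(2)
proof (induction rule: affSchur.induct)
  case (gen X)
  then consider i where "X = psiE n r i" | i where "X = psiF n r i"
    | i e where "X = psiK n r i e" "e \<in> {1, -1}" | d where "X = psiR r d" "d \<in> {1, -1}"
    unfolding gens_def by auto
  then show ?case
  proof cases
    case (3 i e)
    then have "mat_op r (matK n r i e) \<in> affSchur n r"
      using assms(1) psi_in_affSchur(3)[of n e r i] by (simp add: psiK_eq)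
    then show ?thesis
      unfolding \<open>X = psiK n r i e\<close> psiK_eq by (rule transposable_diagonal[OF diagonal_matK])
  qed (use assms(1) transposable_psiE transposable_psiF transposable_psiR in simp_all)
next
  case one
  show ?case
    using affSchur.one unfolding psiId_eq by (rule transposable_diagonal[OF diagonal_matId])
next
  case (mult X Y)
  then show ?case by (intro transposable_comp)
qed (simp_all add: transposable_add transposable_smult)

section \<open>The idempotent 1_r\<close>

definition diag_mat :: "(int list \<Rightarrow> K) \<Rightarrow> mat" where
  "diag_mat g = (\<lambda>s t. if s = t then g s else 0)"

definition diag_in_affSchur :: "nat \<Rightarrow> nat \<Rightarrow> (int list \<Rightarrow> K) \<Rightarrow> bool" where
  "diag_in_affSchur n r g \<longleftrightarrow> mat_op r (diag_mat g) \<in> affSchur n r"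

definition res_count :: "nat \<Rightarrow> nat \<Rightarrow> int \<Rightarrow> int list \<Rightarrow> nat" where
  "res_count n r i s = card {j. j < r \<and> cng n (s ! j) i}"

lemma diagonal_diag_mat: "diagonal r (diag_mat g)"
  unfolding diagonal_def diag_mat_def by auto

lemma diag_in_affSchur_mult:
  assumes "diag_in_affSchur n r g" "diag_in_affSchur n r h"
  shows "diag_in_affSchur n r (\<lambda>s. g s * h s)"
proof -
  have "mat_mult r (diag_mat g) (diag_mat h) s t = diag_mat (\<lambda>s. g s * h s) s t"
    if "length s = r" "length t = r" for s t
    using mat_mult_diagonal_left[OF diagonal_diag_mat diagonal_imp_banded[OF diagonal_diag_mat] that]
    by (simp add: diag_mat_def)
  then have "mat_op r (diag_mat (\<lambda>s. g s * h s)) = mat_op r (diag_mat g) \<circ> mat_op r (diag_mat h)"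
    by (simp add: mat_op_mat_mult[symmetric] diagonal_imp_banded diagonal_diag_mat mat_op_eq_iff)
  then show ?thesis using assms affSchur.mult unfolding diag_in_affSchur_def by metis
qed

lemma diag_in_affSchur_one: "diag_in_affSchur n r (\<lambda>s. 1)"
proof -
  have "mat_op r (diag_mat (\<lambda>s. 1)) = psiId r"
    by (simp add: psiId_eq mat_op_eq_iff matId_eq diag_mat_def)
  then show ?thesis using affSchur.one unfolding diag_in_affSchur_def by simp
qed

lemma diag_in_affSchur_affine:
  assumes "diag_in_affSchur n r g"
  shows "diag_in_affSchur n r (\<lambda>s. a * g s + b)"
proof -
  have "mat_op r (diag_mat (\<lambda>s. a * g s + b))
      = mat_op r (\<lambda>s t. a * diag_mat g s t + b * diag_mat (\<lambda>s. 1) s t)"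
    by (simp add: mat_op_eq_iff diag_mat_def)
  also have "\<dots> = (\<lambda>v s. a * mat_op r (diag_mat g) v s + b * mat_op r (diag_mat (\<lambda>s. 1)) v s)"
    by (simp add: mat_op_add[symmetric] mat_op_smult[symmetric])
  moreover have "(\<lambda>v s. a * mat_op r (diag_mat g) v s + b * mat_op r (diag_mat (\<lambda>s. 1)) v s)
      \<in> affSchur n r"
    using assms diag_in_affSchur_one unfolding diag_in_affSchur_def
    by (intro affSchur.add affSchur.smult)
  ultimately show ?thesis unfolding diag_in_affSchur_def by simp
qed

lemma diag_in_affSchur_prod:
  assumes "finite A" "\<And>a. a \<in> A \<Longrightarrow> diag_in_affSchur n r (g a)"
  shows "diag_in_affSchur n r (\<lambda>s. \<Prod>a\<in>A. g a s)"
  using assms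
  by (induction A rule: finite_induct) (simp_all add: diag_in_affSchur_one diag_in_affSchur_mult)

lemma diag_in_affSchur_qq_pow_res_count:
  assumes "n > 0"
  shows "diag_in_affSchur n r (\<lambda>s. qq ^ res_count n r i s)"
proof -
  have "matK n r i 1 s s = qq ^ res_count n r i s" for s
  proof -
    have "matK n r i 1 s s = (\<Prod>k<r. if cng n i (s!k) then qq else 1)"
      by (simp add: matK_def tprod_def sK_def cong: if_cong)
    also have "\<dots> = (\<Prod>k\<in>{k\<in>{..<r}. cng n i (s!k)}. qq)"
      by (rule prod.inter_filter[symmetric]) simp
    also have "{k\<in>{..<r}. cng n i (s!k)} = {j. j < r \<and> cng n (s ! j) i}"
      by (auto simp: cng_sym)
    finally show ?thesis by (simp add: res_count_def)
  qed
  then have "mat_op r (matK n r i 1) = mat_op r (diag_mat (\<lambda>s. qq ^ res_count n r i s))"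
    using diagonal_matK[of r n i 1] unfolding mat_op_eq_iff diagonal_def diag_mat_def by auto
  then show ?thesis
    using psi_in_affSchur(3)[OF assms, of 1 r i] unfolding diag_in_affSchur_def psiK_eq by simp
qed

lemma qq_pow_inj: "qq ^ a = qq ^ b \<Longrightarrow> a = b"
proof -
  have qq_pow: "qq ^ m = Fract ([:0, 1:] ^ m) 1" for m
    by (induction m) (simp_all add: qq_def One_fract_def)
  assume "qq ^ a = qq ^ b"
  then have "([:0, 1:] ^ a :: rat poly) = [:0, 1:] ^ b" by (simp add: qq_pow eq_fract)
  then have "degree ([:0, 1:] ^ a :: rat poly) = degree ([:0, 1::rat:] ^ b)" by simp
  then show "a = b" using degree_linear_power[of "0::rat"] by simp
qed

lemma lagrange_basis_at_node:
  fixes x :: "'a::field"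
  assumes "inj_on p A" "finite A" "l \<in> A" "x \<in> p ` A"
  shows "(\<Prod>m\<in>A - {l}. (x - p m) / (p l - p m)) = (if x = p l then 1 else 0)"
proof (cases "x = p l")
  case True
  have "p l \<noteq> p m" if "m \<in> A - {l}" for m
    using assms(1,3) that by (auto dest: inj_onD)
  then show ?thesis using True by (simp add: prod.neutral)
next
  case False
  then obtain m where "m \<in> A - {l}" "x = p m" using assms(4) by auto
  then show ?thesis using False assms(2) by (auto intro!: prod_zero)
qed

lemma res_count_le: "res_count n r i s \<le> r"
  unfolding res_count_def by (rule order_trans[OF card_mono[of "{..<r}"]]) auto

lemma diag_in_affSchur_res_count_eq:
  assumes "n > 0" "l \<le> r"
  shows "diag_in_affSchur n r (\<lambda>s. if res_count n r i s = l then 1 else 0)"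
proof -
  have "(\<Prod>m\<in>{0..r} - {l}. (qq ^ res_count n r i s - qq ^ m) / (qq ^ l - qq ^ m))
      = (if res_count n r i s = l then 1 else 0)" for s
    using lagrange_basis_at_node[of "(^) qq" "{0..r}" l] assms(2) res_count_le[of n r i s]
      qq_pow_inj by (auto simp: inj_on_def)
  moreover have "diag_in_affSchur n r (\<lambda>s. (qq ^ res_count n r i s - qq ^ m) / (qq ^ l - qq ^ m))"
    for m
  proof -
    have eq: "(\<lambda>s. (qq ^ res_count n r i s - qq ^ m) / (qq ^ l - qq ^ m))
        = (\<lambda>s. inverse (qq ^ l - qq ^ m) * qq ^ res_count n r i s + - (qq ^ m / (qq ^ l - qq ^ m)))"
      by (simp add: fun_eq_iff divide_inverse algebra_simps)
    show ?thesis
      unfolding eq by (rule diag_in_affSchur_affine[OF diag_in_affSchur_qq_pow_res_count[OF assms(1)]])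
  qed
  then have "diag_in_affSchur n r
      (\<lambda>s. \<Prod>m\<in>{0..r} - {l}. (qq ^ res_count n r i s - qq ^ m) / (qq ^ l - qq ^ m))"
    by (intro diag_in_affSchur_prod) auto
  ultimately show ?thesis by simp
qed

lemma one_r_in_affSchur:
  assumes "n > 0" "r \<ge> 1"
  shows "one_r n r \<in> affSchur n r"
proof -
  let ?lam = "\<lambda>i::int. if i \<le> int r then 1 else 0 :: nat"
  have "diag_in_affSchur n r (\<lambda>s. \<Prod>i\<in>{1..int n}. if res_count n r i s = ?lam i then 1 else 0)"
    using assms by (intro diag_in_affSchur_prod diag_in_affSchur_res_count_eq) auto
  moreover have "one_r n r = mat_op r (diag_mat
      (\<lambda>s. \<Prod>i\<in>{1..int n}. if res_count n r i s = ?lam i then 1 else 0))"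
    unfolding one_r_def wtproj_def mat_op_eq_iff diag_mat_def res_count_def
    by (auto simp: prod_zero_iff)
  ultimately show ?thesis unfolding diag_in_affSchur_def by simp
qed

section \<open>Reaching every basis vector from the image of 1_r\<close>

definition weight_one_r :: "nat \<Rightarrow> nat \<Rightarrow> int list \<Rightarrow> bool" where
  "weight_one_r n r u \<longleftrightarrow> length u = r \<and>
     (\<forall>i\<in>{1..int n}. res_count n r i u = (if i \<le> int r then 1 else 0))"

definition reachable :: "nat \<Rightarrow> nat \<Rightarrow> int list \<Rightarrow> bool" where
  "reachable n r t \<longleftrightarrow> (\<exists>M u \<alpha>. banded r M \<and> mat_op r M \<in> affSchur n r \<and> weight_one_r n r u \<and>
     \<alpha> \<noteq> 0 \<and> (\<forall>s. length s = r \<longrightarrow> M s u = (if s = t then \<alpha> else 0)))"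

definition residue_free :: "nat \<Rightarrow> int list \<Rightarrow> int \<Rightarrow> bool" where
  "residue_free n t c \<longleftrightarrow> (\<forall>k<length t. \<not> cng n (t!k) c)"

lemma reachable_weight_one_r: "weight_one_r n r u \<Longrightarrow> reachable n r u"
  unfolding reachable_def
  by (rule exI[of _ "matId r"], rule exI[of _ u], rule exI[of _ 1])
    (use banded_matId affSchur.one[of r n] in \<open>auto simp: psiId_eq matId_eq weight_one_r_def\<close>)

lemma reachable_step:
  assumes "banded r A" "mat_op r A \<in> affSchur n r" "reachable n r t'" "length t' = r" "\<beta> \<noteq> 0"
    "\<And>s. length s = r \<Longrightarrow> A s t' = (if s = t then \<beta> else 0)"
  shows "reachable n r t"
proof -
  obtain M u \<alpha> where M: "banded r M" "mat_op r M \<in> affSchur n r" "weight_one_r n r u" "\<alpha> \<noteq> 0"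
    "\<And>s. length s = r \<Longrightarrow> M s u = (if s = t' then \<alpha> else 0)"
    using assms(3) unfolding reachable_def by blast
  have u: "length u = r" using M(3) by (simp add: weight_one_r_def)
  have "mat_mult r A M s u = (if s = t then \<beta> * \<alpha> else 0)" if "length s = r" for s
    using mat_mult_unit_column[where N = M and u = u, OF u M(4) M(5) assms(4)] assms(6)[OF that] by simp
  moreover have "mat_op r (mat_mult r A M) \<in> affSchur n r"
    using affSchur.mult[OF assms(2) M(2)] by (simp add: mat_op_mat_mult assms(1) M(1))
  ultimately show ?thesis unfolding reachable_def using banded_mat_mult[OF assms(1) M(1)] M(3,4) assms(5)
    by (intro exI[of _ "mat_mult r A M"] exI[of _ u] exI[of _ "\<beta> * \<alpha>"]) auto
qed

lemma tprod_eq_0: "k < r \<Longrightarrow> F k (s!k) (t!k) = 0 \<Longrightarrow> tprod r F s t = 0"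
  using tprod_nonzeroD by blast

lemma tprod_eq_0_off_target:
  assumes "length s = r" "length t = r" "j < r" "s \<noteq> t[j := x]"
    "\<And>k a b. k < r \<Longrightarrow> k \<noteq> j \<Longrightarrow> a \<noteq> b \<Longrightarrow> F k a b = 0" "\<And>a. a \<noteq> x \<Longrightarrow> F j a (t!j) = 0"
  shows "tprod r F s t = 0"
proof -
  obtain k where k: "k < r" "s!k \<noteq> t[j := x] ! k"
    using assms(1,2,4) nth_equalityI[of s "t[j := x]"] by auto
  then have "F k (s!k) (t!k) = 0"
    using assms(2,3,5,6) by (cases "k = j") auto
  then show ?thesis by (rule tprod_eq_0[OF k(1)])
qed

lemma sum_lessThan_single:
  fixes j r :: nat
  assumes "j < r" "\<And>j'. j' < r \<Longrightarrow> j' \<noteq> j \<Longrightarrow> G j' = 0"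
  shows "(\<Sum>j'<r. G j') = G j"
proof -
  have "(\<Sum>j'<r. G j') = (\<Sum>j'\<in>{j}. G j')"
    by (rule sum.mono_neutral_right) (use assms in auto)
  then show ?thesis by simp
qed

lemma matF_column:
  assumes "length t = r" "length s = r" "j < r" "\<forall>k<r. k \<noteq> j \<longrightarrow> \<not> cng n (t!k) (t!j)"
  shows "matF n r (t!j) s t =
    (if s = t[j := t!j + 1] then (\<Prod>k<j. sKt n (t!j) (-1) (t!k) (t!k)) else 0)"
proof -
  define i where "i = t!j"
  define G where "G = (\<lambda>j'. tprod r (\<lambda>k. if k < j' then sKt n i (-1) else if k = j' then sF n i else sId) s t)"
  have "G j' = 0" if "j' < r" "j' \<noteq> j" for j'
    unfolding G_def using assms(4) that
    by (intro tprod_eq_0[OF that(1)]) (auto simp: sF_def i_def cng_sym)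
  then have "matF n r i s t = G j"
    unfolding matF_def G_def[symmetric] by (rule sum_lessThan_single[OF assms(3)])
  also have "G j = (if s = t[j := t!j + 1] then (\<Prod>k<j. sKt n i (-1) (t!k) (t!k)) else 0)"
  proof (cases "s = t[j := t!j + 1]")
    case True
    have "G j = (\<Prod>k<r. if k < j then sKt n i (-1) (t!k) (t!k) else 1)"
      unfolding G_def tprod_def using True assms(1,3)
      by (intro prod.cong) (auto simp: sF_def sId_def i_def cng_def)
    also have "\<dots> = (\<Prod>k\<in>{k\<in>{..<r}. k < j}. sKt n i (-1) (t!k) (t!k))"
      by (rule prod.inter_filter[symmetric]) simp
    also have "{k\<in>{..<r}. k < j} = {..<j}" using assms(3) by auto
    finally show ?thesis using True by simp
  next
    case False
    then show ?thesis
      unfolding G_def using assms(1-3) sKt_off_diag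
      by (auto intro!: tprod_eq_0_off_target simp: sF_def sId_def)
  qed
  finally show ?thesis by (simp add: i_def)
qed

lemma matE_column:
  assumes "length t = r" "length s = r" "j < r" "\<forall>k<r. k \<noteq> j \<longrightarrow> \<not> cng n (t!k) (t!j)"
  shows "matE n r (t!j - 1) s t =
    (if s = t[j := t!j - 1] then (\<Prod>k\<in>{j<..<r}. sKt n (t!j - 1) 1 (t!k) (t!k)) else 0)"
proof -
  define i where "i = t!j - 1"
  define G where "G = (\<lambda>j'. tprod r (\<lambda>k. if k < j' then sId else if k = j' then sE n i else sKt n i 1) s t)"
  have "G j' = 0" if "j' < r" "j' \<noteq> j" for j'
  proof -
    have "sE n i a (t!j') = 0" for a
      using assms(4) that cng_add_one[of n i a] by (auto simp: sE_def i_def cng_sym)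
    then show ?thesis
      unfolding G_def by (intro tprod_eq_0[OF that(1)]) auto
  qed
  then have "matE n r i s t = G j"
    unfolding matE_def G_def[symmetric] by (rule sum_lessThan_single[OF assms(3)])
  also have "G j = (if s = t[j := t!j - 1] then (\<Prod>k\<in>{j<..<r}. sKt n i 1 (t!k) (t!k)) else 0)"
  proof (cases "s = t[j := t!j - 1]")
    case True
    have "G j = (\<Prod>k<r. if j < k then sKt n i 1 (t!k) (t!k) else 1)"
      unfolding G_def tprod_def using True assms(1,3)
      by (intro prod.cong) (auto simp: sE_def sId_def i_def cng_def)
    also have "\<dots> = (\<Prod>k\<in>{k\<in>{..<r}. j < k}. sKt n i 1 (t!k) (t!k))"
      by (rule prod.inter_filter[symmetric]) simp
    also have "{k\<in>{..<r}. j < k} = {j<..<r}" by auto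
    finally show ?thesis using True by simp
  next
    case False
    then show ?thesis
      unfolding G_def using assms(1-3) sKt_off_diag
      by (auto intro!: tprod_eq_0_off_target simp: sE_def sId_def)
  qed
  finally show ?thesis by (simp add: i_def)
qed

lemma reachable_if_lowered_reachable:
  assumes "n > 0" "reachable n r (t[j := t!j - 1])" "length t = r" "j < r" "residue_free n t (t!j - 1)"
  shows "reachable n r t"
proof -
  define t' where "t' = t[j := t!j - 1]"
  define \<beta> where "\<beta> = (\<Prod>k<j. sKt n (t'!j) (-1) (t'!k) (t'!k))"
  have t': "length t' = r" "t'[j := t'!j + 1] = t"
    using assms(3,4) by (simp_all add: t'_def)
  have "\<forall>k<r. k \<noteq> j \<longrightarrow> \<not> cng n (t'!k) (t'!j)"
    using assms(3-5) by (auto simp: t'_def residue_free_def)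
  then have column: "matF n r (t'!j) s t' = (if s = t then \<beta> else 0)" if "length s = r" for s
    using matF_column[OF t'(1) that assms(4)] t'(2) by (simp add: \<beta>_def)
  have \<beta>: "\<beta> \<noteq> 0" unfolding \<beta>_def using sKt_diag_neq_0 by (simp add: prod_zero_iff)
  have mem: "mat_op r (matF n r (t'!j)) \<in> affSchur n r"
    using psi_in_affSchur(2)[OF assms(1)] by (simp add: psiF_eq)
  have "reachable n r t'" using assms(2) by (simp add: t'_def)
  then show ?thesis by (rule reachable_step[OF banded_matF mem _ t'(1) \<beta> column])
qed

lemma reachable_if_raised_reachable:
  assumes "n > 0" "reachable n r (t[j := t!j + 1])" "length t = r" "j < r" "residue_free n t (t!j + 1)"
  shows "reachable n r t"
proof -
  define t' where "t' = t[j := t!j + 1]"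
  define \<beta> where "\<beta> = (\<Prod>k\<in>{j<..<r}. sKt n (t'!j - 1) 1 (t'!k) (t'!k))"
  have t': "length t' = r" "t'[j := t'!j - 1] = t"
    using assms(3,4) by (simp_all add: t'_def)
  have "\<forall>k<r. k \<noteq> j \<longrightarrow> \<not> cng n (t'!k) (t'!j)"
    using assms(3-5) by (auto simp: t'_def residue_free_def)
  then have column: "matE n r (t'!j - 1) s t' = (if s = t then \<beta> else 0)" if "length s = r" for s
    using matE_column[OF t'(1) that assms(4)] t'(2) by (simp add: \<beta>_def)
  have \<beta>: "\<beta> \<noteq> 0" unfolding \<beta>_def using sKt_diag_neq_0 by (simp add: prod_zero_iff)
  have mem: "mat_op r (matE n r (t'!j - 1)) \<in> affSchur n r"
    using psi_in_affSchur(1)[OF assms(1)] by (simp add: psiE_eq)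
  have "reachable n r t'" using assms(2) by (simp add: t'_def)
  then show ?thesis by (rule reachable_step[OF banded_matE mem _ t'(1) \<beta> column])
qed

definition residue_rep :: "nat \<Rightarrow> int \<Rightarrow> nat" where
  "residue_rep n x = (if x mod int n = 0 then n else nat (x mod int n))"

lemma residue_rep_bounds:
  assumes "n > 0"
  shows "1 \<le> residue_rep n x" "residue_rep n x \<le> n"
proof -
  have "0 \<le> x mod int n" "x mod int n < int n" using assms by simp_all
  then have "x mod int n \<noteq> 0 \<Longrightarrow> 1 \<le> nat (x mod int n) \<and> nat (x mod int n) \<le> n" by linarith
  then show "1 \<le> residue_rep n x" "residue_rep n x \<le> n"
    using assms by (auto simp: residue_rep_def)
qed

lemma cng_residue_rep: "n > 0 \<Longrightarrow> cng n (int (residue_rep n x)) x"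
  unfolding residue_rep_def cng_def by auto

lemma residue_rep_eq_iff: "n > 0 \<Longrightarrow> residue_rep n x = residue_rep n y \<longleftrightarrow> cng n x y"
proof
  assume "n > 0" "residue_rep n x = residue_rep n y"
  then show "cng n x y" using cng_residue_rep[of n x] cng_residue_rep[of n y] by (simp add: cng_def)
qed (simp add: residue_rep_def cng_def)

lemma residue_rep_of_range: "i \<in> {1..int n} \<Longrightarrow> residue_rep n i = nat i"
  by (cases "i = int n") (auto simp: residue_rep_def)

lemma residue_rep_diff_one:
  assumes "n \<ge> 2" "residue_rep n x \<ge> 2"
  shows "residue_rep n (x - 1) = residue_rep n x - 1"
proof (cases "x mod int n = 0")
  case True
  have "(x - 1) mod int n = (x mod int n - 1) mod int n" by (simp add: mod_diff_left_eq)
  also have "\<dots> = int n - 1" using True assms(1) by (simp add: zmod_minus1)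
  finally show ?thesis using True assms(1) by (simp add: residue_rep_def)
next
  case False
  define m where "m = x mod int n"
  have m: "0 \<le> m" "m < int n" "m \<ge> 2" using assms False by (auto simp: m_def residue_rep_def)
  have "(x - 1) mod int n = (m - 1) mod int n" by (simp add: mod_diff_left_eq m_def)
  also have "\<dots> = m - 1" using m by (intro mod_pos_pos_trivial) auto
  finally show ?thesis using False m by (simp add: residue_rep_def m_def[symmetric] nat_diff_distrib)
qed

lemma down_closed_nat_set_eq:
  fixes A :: "nat set"
  assumes "finite A" "card A = r" "\<And>x. x \<in> A \<Longrightarrow> 1 \<le> x" "\<And>x. x \<in> A \<Longrightarrow> 2 \<le> x \<Longrightarrow> x - 1 \<in> A"
  shows "A = {1..r}"
proof -
  have "x \<in> A \<longrightarrow> {1..x} \<subseteq> A" for x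
  proof (induction x)
    case (Suc x)
    show ?case
    proof
      assume x: "Suc x \<in> A"
      show "{1..Suc x} \<subseteq> A"
      proof (cases "x = 0")
        case False
        then have "x \<in> A" using assms(4)[OF x] by simp
        then show ?thesis using Suc.IH x by (auto simp: le_Suc_eq)
      qed (use x in auto)
    qed
  qed simp
  then have "card {1..x} \<le> card A" if "x \<in> A" for x using that card_mono[OF assms(1)] by blast
  then have "A \<subseteq> {1..r}" using assms(2,3) by fastforce
  then show ?thesis using assms(2) by (intro card_subset_eq) simp_all
qed

lemma card_fiber_inj_on:
  assumes "inj_on f A"
  shows "card {x\<in>A. f x = y} = (if y \<in> f ` A then 1 else 0)"
proof (cases "y \<in> f ` A")
  case True
  then obtain x where "x \<in> A" "y = f x" by blast
  then have "{x\<in>A. f x = y} = {x}" using assms by (auto dest: inj_onD)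
  then show ?thesis using True by simp
next
  case False
  then have empty: "{x\<in>A. f x = y} = {}" by auto
  show ?thesis unfolding empty using False by simp
qed

definition distinct_residues :: "nat \<Rightarrow> nat \<Rightarrow> int list \<Rightarrow> bool" where
  "distinct_residues n r t \<longleftrightarrow> (\<forall>k<r. \<forall>k'<r. k \<noteq> k' \<longrightarrow> \<not> cng n (t!k) (t!k'))"

text \<open>The representatives in {1..n} of the residues of t form an r-element set closed under
  predecessor, hence equal {1..r}.\<close>
lemma weight_one_r_if_no_gap:
  assumes "n \<ge> 2" "length t = r" "distinct_residues n r t"
    "\<forall>j<r. 2 \<le> residue_rep n (t!j) \<longrightarrow> \<not> residue_free n t (t!j - 1)"
  shows "weight_one_r n r t"
proof -
  have n: "n > 0" using assms(1) by simp
  let ?f = "\<lambda>k. residue_rep n (t!k)"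
  have inj: "inj_on ?f {..<r}"
    using assms(3) residue_rep_eq_iff[OF n] unfolding inj_on_def distinct_residues_def by blast
  have "x - 1 \<in> ?f ` {..<r}" if x: "x \<in> ?f ` {..<r}" "2 \<le> x" for x
  proof -
    obtain j where j: "j < r" "x = ?f j" using x(1) by auto
    then obtain k where k: "k < r" "cng n (t!k) (t!j - 1)"
      using assms(2,4) x(2) unfolding residue_free_def by auto
    then have "?f k = residue_rep n (t!j - 1)" using residue_rep_eq_iff[OF n] by blast
    also have "\<dots> = x - 1" using residue_rep_diff_one[OF assms(1)] j x(2) by simp
    finally have "?f k = x - 1" .
    then show ?thesis using k(1) by force
  qed
  then have image: "?f ` {..<r} = {1..r}"
    using residue_rep_bounds[OF n] card_image[OF inj]
    by (intro down_closed_nat_set_eq) auto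
  have "res_count n r i t = (if i \<le> int r then 1 else 0)" if i: "i \<in> {1..int n}" for i
  proof -
    have "cng n (t!j) i \<longleftrightarrow> ?f j = nat i" for j
      using residue_rep_eq_iff[OF n, of "t!j" i] residue_rep_of_range[OF i] by simp
    then have "res_count n r i t = card {j\<in>{..<r}. ?f j = nat i}"
      unfolding res_count_def by (metis lessThan_iff)
    also have "\<dots> = (if nat i \<in> ?f ` {..<r} then 1 else 0)" by (rule card_fiber_inj_on[OF inj])
    also have "\<dots> = (if i \<le> int r then 1 else 0)" using i image by auto
    finally show ?thesis .
  qed
  then show ?thesis using assms(2) by (simp add: weight_one_r_def)
qed

lemma reachable_if_distinct_residues:
  assumes "n \<ge> 2"
  shows "length t = r \<Longrightarrow> distinct_residues n r t \<Longrightarrow> reachable n r t"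
proof (induction "\<Sum>k<r. residue_rep n (t!k)" arbitrary: t rule: less_induct)
  case less
  show ?case
  proof (cases "weight_one_r n r t")
    case False
    then obtain j where j: "j < r" "2 \<le> residue_rep n (t!j)" "residue_free n t (t!j - 1)"
      using weight_one_r_if_no_gap[OF assms less.prems] by blast
    define t' where "t' = t[j := t!j - 1]"
    have len: "length t' = r" using less.prems(1) by (simp add: t'_def)
    have dist: "distinct_residues n r t'"
      using less.prems j(1,3) cng_sym
      unfolding distinct_residues_def residue_free_def t'_def by (auto simp: nth_list_update)
    have sum: "(\<Sum>k<r. residue_rep n (t'!k)) < (\<Sum>k<r. residue_rep n (t!k))"
      using j less.prems(1) residue_rep_diff_one[OF assms j(2)]
      by (simp add: t'_def sum.remove[of "{..<r}" j])
    have "n > 0" using assms by simp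
    moreover have "reachable n r (t[j := t!j - 1])" using less.hyps[OF sum len dist] by (simp add: t'_def)
    ultimately show ?thesis by (rule reachable_if_lowered_reachable[OF _ _ less.prems(1) j(1,3)])
  qed (rule reachable_weight_one_r)
qed

definition residues :: "nat \<Rightarrow> nat \<Rightarrow> int list \<Rightarrow> int set" where
  "residues n r t = (\<lambda>k. t!k mod int n) ` {..<r}"

lemma finite_residues: "finite (residues n r t)"
  by (simp add: residues_def)

lemma card_residues_le: "card (residues n r t) \<le> r"
  unfolding residues_def using card_image_le[of "{..<r}"] by simp

lemma distinct_residues_if_card_residues: "card (residues n r t) = r \<Longrightarrow> distinct_residues n r t"
  unfolding distinct_residues_def residues_def cng_def
  by (metis card_lessThan eq_card_imp_inj_on finite_lessThan inj_on_contraD lessThan_iff)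

lemma residue_free_iff: "length t = r \<Longrightarrow> residue_free n t c \<longleftrightarrow> c mod int n \<notin> residues n r t"
  unfolding residue_free_def residues_def cng_def by (auto simp: image_iff) (metis lessThan_iff)

lemma residue_free_cng: "cng n a b \<Longrightarrow> residue_free n t a = residue_free n t b"
  unfolding residue_free_def cng_def by auto

lemma card_residues_raise_shared:
  assumes "length t = r" "p < r" "q < r" "q \<noteq> p" "cng n (t!q) (t!p)" "residue_free n t (t!p + 1)"
  shows "card (residues n r t) < card (residues n r (t[p := t!p + 1]))"
proof -
  define t' where "t' = t[p := t!p + 1]"
  have "t!k mod int n \<in> residues n r t'" if "k < r" for k
  proof (cases "k = p")
    case True
    then have "t!k mod int n = t'!q mod int n" using assms(1,4,5) by (simp add: t'_def cng_def)
    then show ?thesis using assms(3) unfolding residues_def by auto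
  next
    case False
    then show ?thesis using that assms(1) unfolding residues_def t'_def by force
  qed
  then have "residues n r t \<subseteq> residues n r t'" by (auto simp: residues_def)
  moreover have "(t!p + 1) mod int n \<in> residues n r t' - residues n r t"
    using assms(1,2,6) residue_free_iff[OF assms(1)] unfolding residues_def t'_def by force
  ultimately show ?thesis unfolding t'_def[symmetric]
    by (intro psubset_card_mono finite_residues) blast
qed

lemma residues_raise_unique:
  assumes "length t = r" "p < r" "\<forall>q<r. q \<noteq> p \<longrightarrow> \<not> cng n (t!q) (t!p)"
  shows "residues n r (t[p := t!p + 1]) = insert ((t!p + 1) mod int n) (residues n r t - {t!p mod int n})"
    (is "residues n r ?t' = ?R")
proof
  show "residues n r ?t' \<subseteq> ?R"
  proof
    fix c assume "c \<in> residues n r ?t'"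
    then obtain k where k: "k < r" "c = ?t'!k mod int n" unfolding residues_def by auto
    show "c \<in> ?R"
    proof (cases "k = p")
      case False
      then have "c = t!k mod int n" "t!k mod int n \<noteq> t!p mod int n"
        using k assms(1,3) by (auto simp: cng_def)
      then show ?thesis using k(1) unfolding residues_def by auto
    qed (use k assms(1) in simp)
  qed
  show "?R \<subseteq> residues n r ?t'"
  proof
    fix c assume c: "c \<in> ?R"
    obtain k where "k < r" "c = ?t'!k mod int n"
    proof (cases "c = (t!p + 1) mod int n")
      case True
      then show ?thesis using that[of p] assms(1,2) by simp
    next
      case False
      then obtain k where "k < r" "c = t!k mod int n" "k \<noteq> p" using c unfolding residues_def by auto
      then show ?thesis using that[of k] assms(1) by simp
    qed
    then show "c \<in> residues n r ?t'" unfolding residues_def by blast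
  qed
qed

lemma card_residues_raise_unique:
  assumes "length t = r" "p < r" "\<forall>q<r. q \<noteq> p \<longrightarrow> \<not> cng n (t!q) (t!p)"
    "residue_free n t (t!p + 1)"
  shows "card (residues n r (t[p := t!p + 1])) = card (residues n r t)"
proof -
  have "(t!p + 1) mod int n \<notin> residues n r t" "t!p mod int n \<in> residues n r t"
    using residue_free_iff[OF assms(1)] assms(2,4) by (auto simp: residues_def)
  moreover from this(2) have "card (residues n r t) > 0"
    using finite_residues card_gt_0_iff by blast
  ultimately show ?thesis
    unfolding residues_raise_unique[OF assms(1-3)] by (simp add: card_Diff_singleton finite_residues)
qed

lemma residue_free_raise_unique:
  assumes "n \<ge> 2" "length t = r" "p < r" "\<forall>q<r. q \<noteq> p \<longrightarrow> \<not> cng n (t!q) (t!p)"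
  shows "residue_free n (t[p := t!p + 1]) (t!p)"
proof -
  have "\<not> cng n (t!p + 1) (t!p)" using not_cng_add_one[OF assms(1)] cng_sym by metis
  then have "\<not> cng n (t[p := t!p + 1] ! k) (t!p)" if "k < r" for k
    using assms(2-4) that by (cases "k = p") auto
  then show ?thesis using assms(2) unfolding residue_free_def by simp
qed

text \<open>Raising an entry whose residue is shared into a free residue increases the number of
  occupied residues, so an induction on that number applies.\<close>
lemma reachable_if_raise_shared:
  assumes "n \<ge> 2" "\<And>t'. length t' = r \<Longrightarrow> card (residues n r t') > card (residues n r t) \<Longrightarrow> reachable n r t'"
    "length t = r" "p < r" "q < r" "q \<noteq> p" "cng n (t!q) (t!p)" "residue_free n t (t!p + 1)"
  shows "reachable n r t"
proof -
  have "n > 0" using assms(1) by simp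
  moreover have "reachable n r (t[p := t!p + 1])"
    using assms(2,3) card_residues_raise_shared[OF assms(3-8)] by simp
  ultimately show ?thesis by (rule reachable_if_raised_reachable[OF _ _ assms(3,4,8)])
qed

text \<open>Two entries share the residue y and y + k is free: push the entries with residues
  y + k - 1, y + k - 2, ... one step up, starting with the topmost.\<close>
lemma reachable_by_pushing:
  assumes more: "\<And>t'. length t' = r \<Longrightarrow> card (residues n r t') > oc \<Longrightarrow> reachable n r t'"
    and "n \<ge> 2" "k1 < r" "k2 < r" "k1 \<noteq> k2"
  shows "length t = r \<Longrightarrow> card (residues n r t) = oc \<Longrightarrow> cng n (t!k1) y \<Longrightarrow> cng n (t!k2) y \<Longrightarrow>
    residue_free n t (y + int k) \<Longrightarrow> reachable n r t"
proof (induction k arbitrary: t)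
  case 0
  then show ?case using assms(3) by (auto simp: residue_free_def)
next
  case (Suc k)
  show ?case
  proof (cases "residue_free n t (y + int k)")
    case True
    then show ?thesis using Suc.IH Suc.prems(1-4) by blast
  next
    case False
    then obtain p where p: "p < r" "cng n (t!p) (y + int k)"
      using Suc.prems(1) unfolding residue_free_def by auto
    have free: "residue_free n t (t!p + 1)"
      using Suc.prems(5) residue_free_cng[OF cng_add_one[OF p(2)]] by (simp add: ac_simps)
    show ?thesis
    proof (cases "\<exists>q<r. q \<noteq> p \<and> cng n (t!q) (t!p)")
      case True
      moreover have "\<And>t'. length t' = r \<Longrightarrow> card (residues n r t') > card (residues n r t) \<Longrightarrow> reachable n r t'"
        using more Suc.prems(2) by simp
      ultimately show ?thesis
        using reachable_if_raise_shared[OF assms(2) _ Suc.prems(1) p(1) _ _ _ free] by blast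
    next
      case False
      define t' where "t' = t[p := t!p + 1]"
      have "k1 \<noteq> p" "k2 \<noteq> p" using False Suc.prems(3,4) assms(3-5) cng_sym cng_trans by metis+
      then have "t'!k1 = t!k1" "t'!k2 = t!k2" by (simp_all add: t'_def)
      moreover have "residue_free n t' (y + int k)"
        using residue_free_raise_unique[OF assms(2) Suc.prems(1) p(1)] False residue_free_cng[OF p(2)]
        by (auto simp: t'_def)
      moreover have "length t' = r" "card (residues n r t') = oc"
        using card_residues_raise_unique[OF Suc.prems(1) p(1)] False free Suc.prems(1,2)
        by (auto simp: t'_def)
      ultimately have "reachable n r t'" using Suc.IH Suc.prems(3,4) by simp
      then show ?thesis
        using assms(2) reachable_if_raised_reachable[OF _ _ Suc.prems(1) p(1) free] by (simp add: t'_def)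
    qed
  qed
qed

lemma exists_free_shift:
  assumes "n > r" "length t = r"
  obtains k where "residue_free n t (y + int k)"
proof -
  have "card (residues n r t) < card {0..<int n}" using card_residues_le[of n r t] assms(1) by simp
  then obtain c where c: "c \<in> {0..<int n}" "c \<notin> residues n r t"
    using card_mono[OF finite_residues] by (meson not_le subsetI)
  have "(y + int (nat ((c - y) mod int n))) mod int n = c"
    using c(1) assms(1) by (simp add: mod_add_right_eq)
  then show ?thesis
    using c(2) by (intro that[of "nat ((c - y) mod int n)"]) (simp add: residue_free_iff[OF assms(2)])
qed

lemma reachable_all:
  assumes "n \<ge> 2" "n > r"
  shows "length t = r \<Longrightarrow> reachable n r t"
proof (induction "r - card (residues n r t)" arbitrary: t rule: less_induct)
  case less
  show ?case
  proof (cases "card (residues n r t) = r")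
    case True
    then show ?thesis
      using reachable_if_distinct_residues[OF assms(1) less.prems] distinct_residues_if_card_residues by blast
  next
    case False
    then have lt: "card (residues n r t) < r" using card_residues_le[of n r t] by simp
    then have "\<not> inj_on (\<lambda>k. t!k mod int n) {..<r}"
      using card_image[of "\<lambda>k. t!k mod int n" "{..<r}"] unfolding residues_def by auto
    then obtain k1 k2 where k12: "k1 < r" "k2 < r" "k1 \<noteq> k2" "cng n (t!k2) (t!k1)"
      unfolding inj_on_def cng_def by auto
    obtain k where k: "residue_free n t (t!k1 + int k)"
      using exists_free_shift[OF assms(2) less.prems] .
    have more: "reachable n r t'"
      if "length t' = r" "card (residues n r t') > card (residues n r t)" for t'
      using less.hyps that card_residues_le[of n r t'] lt by simp
    have "cng n (t!k1) (t!k1)" by (simp add: cng_def)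
    from reachable_by_pushing[OF more assms(1) k12(1-3) less.prems refl this k12(4) k]
    show ?thesis .
  qed
qed

lemma one_r_eq_diag: "one_r n r = mat_op r (diag_mat (\<lambda>s. if weight_one_r n r s then 1 else 0))"
  unfolding one_r_def wtproj_def mat_op_eq_iff diag_mat_def weight_one_r_def res_count_def by auto

section \<open>Injectivity\<close>

lemma reachable_transpose:
  assumes "n \<ge> 2" "reachable n r s"
  obtains M' u' \<beta> where "banded r M'" "mat_op r M' \<in> affSchur n r" "weight_one_r n r u'" "\<beta> \<noteq> 0"
    "\<And>y. length y = r \<Longrightarrow> M' u' y = (if y = s then \<beta> else 0)"
proof -
  obtain Me u' \<beta> where e: "mat_op r Me \<in> affSchur n r" "weight_one_r n r u'" "\<beta> \<noteq> 0"
      "\<And>x. length x = r \<Longrightarrow> Me x u' = (if x = s then \<beta> else 0)"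
    using assms(2) unfolding reachable_def by blast
  obtain M M' where M: "banded r M" "transposed r M' M" "mat_op r Me = mat_op r M"
      "mat_op r M' \<in> affSchur n r"
    using affSchur_transposable[OF assms(1) e(1)] unfolding transposable_def by blast
  have "M' u' y = (if y = s then \<beta> else 0)" if "length y = r" for y
    using M(2,3) e(2,4) that unfolding transposed_def mat_op_eq_iff weight_one_r_def by simp
  then show ?thesis using that banded_transposed[OF M(1,2)] M(4) e(2,3) by blast
qed

text \<open>If D_{s,t} \<noteq> 0, take Z with Z e_u = \<alpha> e_t and Y with e_{u'}^T Y = \<beta> e_s^T (the transpose
  of an element reaching e_s); then 1_r Y D Z 1_r has the entry \<beta> D_{s,t} \<alpha> at (u', u).\<close>
lemma corner_nonzero:
  assumes "n \<ge> 2" "n > r" "D \<in> affSchur n r" "D \<noteq> (\<lambda>v s. 0)"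
  obtains Y Z where "Y \<in> affSchur n r" "Z \<in> affSchur n r"
    "one_r n r \<circ> (Y \<circ> D \<circ> Z) \<circ> one_r n r \<noteq> (\<lambda>v s. 0)"
proof -
  obtain M where M: "banded r M" "D = mat_op r M"
    using affSchur_transposable[OF assms(1,3)] unfolding transposable_def by blast
  then obtain s t where st: "length s = r" "length t = r" "M s t \<noteq> 0"
    using assms(4) mat_op_zero_mat mat_op_eq_iff[of r M "\<lambda>s t. 0"] by auto
  obtain Md u \<alpha> where d: "banded r Md" "mat_op r Md \<in> affSchur n r" "weight_one_r n r u" "\<alpha> \<noteq> 0"
      "\<And>x. length x = r \<Longrightarrow> Md x u = (if x = t then \<alpha> else 0)"
    using reachable_all[OF assms(1,2) st(2)] unfolding reachable_def by blast
  obtain Me u' \<beta> where e: "banded r Me" "mat_op r Me \<in> affSchur n r" "weight_one_r n r u'" "\<beta> \<noteq> 0"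
      "\<And>y. length y = r \<Longrightarrow> Me u' y = (if y = s then \<beta> else 0)"
    using reachable_transpose[OF assms(1) reachable_all[OF assms(1,2) st(1)]] by blast
  have u: "length u = r" "length u' = r" using d(3) e(3) by (simp_all add: weight_one_r_def)
  define W where "W = diag_mat (\<lambda>s. if weight_one_r n r s then 1 else 0)"
  have W: "diagonal r W" "banded r W" "W u u = 1" "W u' u' = 1"
    using d(3) e(3) diagonal_diag_mat diagonal_imp_banded unfolding W_def by (simp_all add: diag_mat_def)
  define N where "N = mat_mult r W (mat_mult r Me (mat_mult r M (mat_mult r Md W)))"
  have col: "mat_mult r Md W x u = (if x = t then \<alpha> else 0)" if "length x = r" for x
    using d(5)[OF that] by (simp add: mat_mult_diagonal_right[OF W(1) u(1)] W(3))
  have "mat_mult r M (mat_mult r Md W) s u = M s t * \<alpha>"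
    by (rule mat_mult_unit_column[where N = "mat_mult r Md W" and u = u, OF u(1) d(4) col st(2)])
  then have "N u' u = \<beta> * (M s t * \<alpha>)"
    unfolding N_def using u mat_mult_unit_row[where A = Me and x = u', OF _ u(1) st(1) e(5)]
    by (simp add: mat_mult_diagonal_left[OF W(1)] W(4) banded_mat_mult W(2) M(1) d(1) e(1))
  then have "mat_op r N \<noteq> (\<lambda>v s. 0)"
    using st(3) d(4) e(4) u mat_op_zero_mat mat_op_eq_iff[of r N "\<lambda>s t. 0"] by auto
  moreover have "mat_op r N = one_r n r \<circ> (mat_op r Me \<circ> D \<circ> mat_op r Md) \<circ> one_r n r"
    unfolding N_def one_r_eq_diag W_def[symmetric] M(2)
    by (simp add: mat_op_mat_mult banded_mat_mult W(2) e(1) M(1) d(1) comp_assoc)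
  ultimately show ?thesis using that e(2) d(2) by metis
qed

lemma qalg_smult_zero: "qalg sA \<Longrightarrow> sA 0 x = 0"
  unfolding qalg_def by (metis add_cancel_right_right add_0)

lemma qalg_smult_neg_one:
  assumes "qalg sA"
  shows "sA (-1) x = - x"
proof -
  have "sA (1 + -1) x = sA 1 x + sA (-1) x" using assms unfolding qalg_def by blast
  then have "0 = x + sA (-1) x" using assms qalg_smult_zero[OF assms] unfolding qalg_def by simp
  then show ?thesis by (simp add: eq_neg_iff_add_eq_0 add.commute)
qed

lemma zero_in_affSchur: "(\<lambda>v s. 0) \<in> affSchur n r"
  using affSchur.smult[OF affSchur.one, of 0] by simp

lemma qalg_hom_on_zero:
  assumes "qalg sA" "qalg_hom_on (affSchur n r) sA f"
  shows "f (\<lambda>v s. 0) = 0"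
proof -
  have "f (\<lambda>v s. 0 * psiId r v s) = sA 0 (f (psiId r))"
    using assms(2) affSchur.one unfolding qalg_hom_on_def by blast
  then show ?thesis by (simp add: qalg_smult_zero[OF assms(1)])
qed

lemma qalg_hom_on_affSchur_inj_on:
  assumes "qalg sA" "qalg_hom_on (affSchur n r) sA f"
    and kernel: "\<And>D. D \<in> affSchur n r \<Longrightarrow> f D = 0 \<Longrightarrow> D = (\<lambda>v s. 0)"
  shows "inj_on f (affSchur n r)"
proof (rule inj_onI)
  fix X Y assume X: "X \<in> affSchur n r" and Y: "Y \<in> affSchur n r" and "f X = f Y"
  define Y' where "Y' = (\<lambda>v s. (-1) * Y v s)"
  define D where "D = (\<lambda>v s. X v s + Y' v s)"
  have Y': "Y' \<in> affSchur n r" unfolding Y'_def using Y by (rule affSchur.smult)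
  have D: "D \<in> affSchur n r" unfolding D_def using X Y' by (rule affSchur.add)
  have "f Y' = sA (-1) (f Y)" using assms(2) Y unfolding qalg_hom_on_def Y'_def by blast
  moreover have "f D = f X + f Y'" using assms(2) X Y' unfolding qalg_hom_on_def D_def by blast
  ultimately have "f D = 0" using \<open>f X = f Y\<close> qalg_smult_neg_one[OF assms(1)] by simp
  then have "X v s + (-1) * Y v s = 0" for v s
    using kernel[OF D] unfolding D_def Y'_def by (metis (no_types))
  then show "X = Y" by (auto simp: fun_eq_iff)
qed

lemma affSchur_kernel_trivial:
  assumes "n \<ge> 2" "r \<ge> 1" "n > r" "qalg sA" "qalg_hom_on (affSchur n r) sA f"
    "inj_on f {one_r n r \<circ> X \<circ> one_r n r | X. X \<in> affSchur n r}"
    "D \<in> affSchur n r" "f D = 0"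
  shows "D = (\<lambda>v s. 0)"
proof (rule ccontr)
  assume "D \<noteq> (\<lambda>v s. 0)"
  then obtain Y Z where YZ: "Y \<in> affSchur n r" "Z \<in> affSchur n r"
    and nonzero: "one_r n r \<circ> (Y \<circ> D \<circ> Z) \<circ> one_r n r \<noteq> (\<lambda>v s. 0)"
    using corner_nonzero[OF assms(1,3,7)] by blast
  have one_r: "one_r n r \<in> affSchur n r" using one_r_in_affSchur assms(1,2) by simp
  have mult: "f (X \<circ> X') = f X * f X'" if "X \<in> affSchur n r" "X' \<in> affSchur n r" for X X'
    using assms(5) that unfolding qalg_hom_on_def by blast
  have zero_corner: "one_r n r \<circ> (\<lambda>v s. 0) \<circ> one_r n r = (\<lambda>v s. 0)"
    by (auto simp: one_r_eq_diag mat_op_zero_vec)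
  have "f (one_r n r \<circ> (Y \<circ> D \<circ> Z) \<circ> one_r n r) = 0"
    using YZ one_r assms(7,8) by (simp add: mult affSchur.mult)
  also have "0 = f (one_r n r \<circ> (\<lambda>v s. 0) \<circ> one_r n r)"
    unfolding zero_corner using qalg_hom_on_zero[OF assms(4,5)] ..
  finally have "one_r n r \<circ> (Y \<circ> D \<circ> Z) \<circ> one_r n r = one_r n r \<circ> (\<lambda>v s. 0) \<circ> one_r n r"
    using YZ assms(7) zero_in_affSchur by (intro inj_onD[OF assms(6)]) (blast intro: affSchur.mult)+
  with nonzero zero_corner show False by simp
qed

theorem proposition3p9:
  fixes n r :: nat and sA :: "K \<Rightarrow> 'a::ring_1 \<Rightarrow> 'a" and f :: "op \<Rightarrow> 'a"
  assumes "n \<ge> 3" and "r \<ge> 3" and "n > r"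
    and "qalg sA"
    and "qalg_hom_on (affSchur n r) sA f"
    and "f ` affSchur n r = UNIV"
    and "inj_on f {one_r n r \<circ> X \<circ> one_r n r | X. X \<in> affSchur n r}"
  shows "bij_betw f (affSchur n r) UNIV"
proof -
  have "inj_on f (affSchur n r)"
    using assms(1-5,7) affSchur_kernel_trivial[of n r sA f]
    by (intro qalg_hom_on_affSchur_inj_on[OF assms(4,5)]) simp
  then show ?thesis using assms(6) unfolding bij_betw_def by blast
qed

end
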